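(* Let $m\ge 1$ and let $\mathbf{S}=(S_1,\dots,S_m)$ be a multimodal source: discrete random variables with finite alphabets $\mathcal{S}_1,\dots,\mathcal{S}_m$ and joint pmf $p_{S_1,\dots,S_m}$. Fix a non-empty subset $E\subseteq[m]=\{1,\dots,m\}$ and suppose the encoder observes i.i.d. samples $\mathbf{S}_E^k=(S_i^k)_{i\in E}$ of $\mathbf{S}_E=(S_i)_{i\in E}$ (with $\mathbf{S}^k$ i.i.d. $\sim p_{\mathbf S}$). Let the decoder reconstruct $\hat{\mathbf S}^k=(\hat S_1^k,\dots,\hat S_m^k)$ subject to distortion constraints $\mathbf D=(D_1,\dots,D_m)$ and perception constraints $\mathbf P=(P_1,\dots,P_m)$. Then the multimodal rate-distortion-perception function $R(\mathbf D,\mathbf P)$ (defined operationally in the context) equals $$ R(\mathbf D,\mathbf P)=\inf_{p_{\hat{\mathbf S}\mid \mathbf S_E}} I(\mathbf S_E;\hat{\mathbf S}) $$ where the infimum is over conditional pmfs $p_{\hat{\mathbf S}\mid\mathbf S_E}$ (with $\hat{\mathbf S}=(\hat S_1,\dots,\hat S_m)$, joint law $p_{\mathbf S}\,p_{\hat{\mathbf S}\mid\mathbf S_E}$) satisfying $$ \mathbb E\, d_i(S_i,\hat S_i)\le D_i\ \ \forall i\in E,\qquad \mathbb E\,\hat d_i(\mathbf S_E,\hat S_i)\le D_i\ \ \forall i\in [m]\setminus E,\qquad \phi_i(p_{S_i},p_{\hat S_i})\le P_i\ \ \forall i\in[m], $$ with the modified distortion $\hat d_i(\mathbf s_E,\hat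 s_i)=\sum_{s_i\in\mathcal S_i} p(s_i\mid \mathbf s_E)\, d_i(s_i,\hat s_i)$.
   Context: Reconstruction alphabets $\hat{\mathcal S}_i$ are finite. For each $i$, $d_i:\mathcal S_i\times\hat{\mathcal S}_i\to[0,\infty)$ is a distortion measure, extended to sequences by $d_i(s_i^k,\hat s_i^k)=\frac1k\sum_{j=1}^k d_i(s_{i,j},\hat s_{i,j})$. For each $i$, $\phi_i:\mathcal D_{\mathcal S_i}\times\mathcal D_{\hat{\mathcal S}_i}\to[0,\infty)$ is a perception metric, convex and continuous in its second argument, where $\mathcal D_{\mathcal X}$ denotes the probability simplex on $\mathcal X$. For a reconstruction sequence $\hat S_i^k=(\hat S_{i,1},\dots,\hat S_{i,k})$, $\bar p_{\hat S_i^k}=\frac1k\sum_{j=1}^k p_{\hat S_{i,j}}$ is its time-averaged marginal. Source coding problem: an encoder $f_s:\prod_{i\in E}\mathcal S_i^k\to\mathcal M$ and decoder $g_s:\mathcal M\to\prod_{i\in[m]}\hat{\mathcal S}_i^k$, with $\hat{\mathbf S}^k=g_s(f_s(\mathbf S_E^k))$. A tuple $(R,\mathbf D,\mathbf P)$ is achievable if for every $\epsilon>0$ and all $k$ large enough there exist $(f_s,g_s)$ with $\frac1k\log|\mathcal M|\le R+\epsilon$, $\mathbb E\,d_i(S_i^k,\hat S_i^k)\le D_i+\epsilon$ for all $i\in[m]$, and $\phi_i(p_{S_i},\bar p_{\hat S_i^k})\le P_i+\epsilon$ for all $i\in[m]$. With $\Omega$ the set of achievable tuples, $R(\mathbf D,\mathbf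 P)=\inf\{R:(R,\mathbf D,\mathbf P)\in\Omega\}$. *)

theory Defs
  imports "HOL-Analysis.Analysis"
begin

(* Modalities are indexed by a finite type 'i (so m = CARD('i) >= 1).
   Source symbols of modality i live in the finite set Sa i :: 'a set,
   reconstruction symbols of modality i in the finite set Rh i :: 'b set.
   A joint source symbol is a tuple s :: 'i => 'a (in PiE UNIV Sa);
   the E-part of it is  restrict s E  (an element of PiE E Sa).
   All pmfs are real-valued functions; logarithms are base 2 throughout. *)

definition prob_simplex :: "'x set \<Rightarrow> ('x \<Rightarrow> real) set" where
  "prob_simplex X = {q. (\<forall>x. 0 \<le> q x) \<and> (\<forall>x. x \<notin> X \<longrightarrow> q x = 0) \<and> sum q X = 1}"

definition convex_cont_on_simplex :: "'x set \<Rightarrow> (('x \<Rightarrow> real) \<Rightarrow> real) \<Rightarrow> bool" where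
  "convex_cont_on_simplex X F \<longleftrightarrow>
     (\<forall>q1\<in>prob_simplex X. \<forall>q2\<in>prob_simplex X. \<forall>t::real. 0 \<le> t \<and> t \<le> 1 \<longrightarrow>
        F (\<lambda>x. t * q1 x + (1 - t) * q2 x) \<le> t * F q1 + (1 - t) * F q2)
     \<and> continuous_on (prob_simplex X) F"

definition marg_E :: "(('i \<Rightarrow> 'a) \<Rightarrow> real) \<Rightarrow> ('i \<Rightarrow> 'a set) \<Rightarrow> 'i set \<Rightarrow> ('i \<Rightarrow> 'a) \<Rightarrow> real" where
  "marg_E pS Sa E x = (\<Sum>s\<in>Pi\<^sub>E UNIV Sa. if restrict s E = x then pS s else 0)"

definition marg_i :: "(('i \<Rightarrow> 'a) \<Rightarrow> real) \<Rightarrow> ('i \<Rightarrow> 'a set) \<Rightarrow> 'i \<Rightarrow> 'a \<Rightarrow> real" where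
  "marg_i pS Sa i a = (\<Sum>s\<in>Pi\<^sub>E UNIV Sa. if s i = a then pS s else 0)"

(* conditional pmf p(s_i | s_E) (set to 0 where p(s_E) = 0) *)
definition cond_i :: "(('i \<Rightarrow> 'a) \<Rightarrow> real) \<Rightarrow> ('i \<Rightarrow> 'a set) \<Rightarrow> 'i set \<Rightarrow> 'i \<Rightarrow> 'a \<Rightarrow> ('i \<Rightarrow> 'a) \<Rightarrow> real" where
  "cond_i pS Sa E i a x =
     (if marg_E pS Sa E x = 0 then 0
      else (\<Sum>s\<in>Pi\<^sub>E UNIV Sa. if s i = a \<and> restrict s E = x then pS s else 0) / marg_E pS Sa E x)"

definition hat_d :: "(('i \<Rightarrow> 'a) \<Rightarrow> real) \<Rightarrow> ('i \<Rightarrow> 'a set) \<Rightarrow> 'i set \<Rightarrow> ('i \<Rightarrow> 'a \<Rightarrow> 'b \<Rightarrow> real)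
                      \<Rightarrow> 'i \<Rightarrow> ('i \<Rightarrow> 'a) \<Rightarrow> 'b \<Rightarrow> real" where
  "hat_d pS Sa E d i x b = (\<Sum>a\<in>Sa i. cond_i pS Sa E i a x * d i a b)"

definition test_channel :: "('i \<Rightarrow> 'a set) \<Rightarrow> ('i \<Rightarrow> 'b set) \<Rightarrow> 'i set \<Rightarrow> (('i \<Rightarrow> 'a) \<Rightarrow> ('i \<Rightarrow> 'b) \<Rightarrow> real) \<Rightarrow> bool" where
  "test_channel Sa Rh E Q \<longleftrightarrow> (\<forall>x\<in>Pi\<^sub>E E Sa. Q x \<in> prob_simplex (Pi\<^sub>E UNIV Rh))"

definition exp_dist where
  "exp_dist pS Sa Rh E Q d i =
     (\<Sum>s\<in>Pi\<^sub>E UNIV Sa. \<Sum>t\<in>Pi\<^sub>E UNIV Rh. pS s * Q (restrict s E) t * d i (s i) (t i))"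

definition exp_hat_dist where
  "exp_hat_dist pS Sa Rh E Q d i =
     (\<Sum>x\<in>Pi\<^sub>E E Sa. \<Sum>t\<in>Pi\<^sub>E UNIV Rh. marg_E pS Sa E x * Q x t * hat_d pS Sa E d i x (t i))"

definition recon_marg where
  "recon_marg pS Sa Rh E Q i b =
     (\<Sum>s\<in>Pi\<^sub>E UNIV Sa. \<Sum>t\<in>Pi\<^sub>E UNIV Rh. if t i = b then pS s * Q (restrict s E) t else 0)"

definition mutual_info :: "'x set \<Rightarrow> 'y set \<Rightarrow> ('x \<Rightarrow> 'y \<Rightarrow> real) \<Rightarrow> real" where
  "mutual_info A B J =
     (\<Sum>x\<in>A. \<Sum>y\<in>B. if J x y = 0 then 0
        else J x y * log 2 (J x y / ((\<Sum>y'\<in>B. J x y') * (\<Sum>x'\<in>A. J x' y))))"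

definition info_SE_hat where
  "info_SE_hat pS Sa Rh E Q =
     mutual_info (Pi\<^sub>E E Sa) (Pi\<^sub>E UNIV Rh) (\<lambda>x t. marg_E pS Sa E x * Q x t)"

(* informational RDP function (infimum in the extended reals; empty inf = \<infinity>) *)
definition R_info where
  "R_info pS Sa Rh E d \<phi> D P =
     Inf {ereal (info_SE_hat pS Sa Rh E Q) | Q.
            test_channel Sa Rh E Q
          \<and> (\<forall>i\<in>E. exp_dist pS Sa Rh E Q d i \<le> D i)
          \<and> (\<forall>i\<in>- E. exp_hat_dist pS Sa Rh E Q d i \<le> D i)
          \<and> (\<forall>i. \<phi> i (marg_i pS Sa i) (recon_marg pS Sa Rh E Q i) \<le> P i)}"

definition seqs :: "('i \<Rightarrow> 'a set) \<Rightarrow> nat \<Rightarrow> (nat \<Rightarrow> 'i \<Rightarrow> 'a) set" where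
  "seqs Sa k = Pi\<^sub>E {..<k} (\<lambda>_. Pi\<^sub>E UNIV Sa)"

definition seq_prob :: "(('i \<Rightarrow> 'a) \<Rightarrow> real) \<Rightarrow> nat \<Rightarrow> (nat \<Rightarrow> 'i \<Rightarrow> 'a) \<Rightarrow> real" where
  "seq_prob pS k s = (\<Prod>j<k. pS (s j))"

definition enc_input :: "'i set \<Rightarrow> nat \<Rightarrow> (nat \<Rightarrow> 'i \<Rightarrow> 'a) \<Rightarrow> (nat \<Rightarrow> 'i \<Rightarrow> 'a)" where
  "enc_input E k s = (\<lambda>j\<in>{..<k}. restrict (s j) E)"

(* a code with message set M = {0..<N}: encoder f, decoder g (g m j i = hat s_{i,j}) *)
definition code_valid :: "('i \<Rightarrow> 'a set) \<Rightarrow> ('i \<Rightarrow> 'b set) \<Rightarrow> 'i set \<Rightarrow> nat \<Rightarrow> nat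
     \<Rightarrow> ((nat \<Rightarrow> 'i \<Rightarrow> 'a) \<Rightarrow> nat) \<Rightarrow> (nat \<Rightarrow> nat \<Rightarrow> 'i \<Rightarrow> 'b) \<Rightarrow> bool" where
  "code_valid Sa Rh E k N f g \<longleftrightarrow>
     1 \<le> N \<and> (\<forall>s\<in>seqs Sa k. f (enc_input E k s) < N)
     \<and> (\<forall>m<N. \<forall>j<k. \<forall>i. g m j i \<in> Rh i)"

definition code_dist where
  "code_dist pS Sa E d k f g i =
     (\<Sum>s\<in>seqs Sa k. seq_prob pS k s *
        ((1 / real k) * (\<Sum>j<k. d i (s j i) (g (f (enc_input E k s)) j i))))"

definition code_recon_marg where
  "code_recon_marg pS Sa E k f g i b =
     (1 / real k) * (\<Sum>j<k. \<Sum>s\<in>seqs Sa k.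
        if g (f (enc_input E k s)) j i = b then seq_prob pS k s else 0)"

definition achievable where
  "achievable pS Sa Rh E d \<phi> R D P \<longleftrightarrow>
     (\<forall>\<epsilon>>0. \<exists>K. \<forall>k\<ge>K. \<exists>N f g.
        code_valid Sa Rh E k N f g
      \<and> log 2 (real N) / real k \<le> R + \<epsilon>
      \<and> (\<forall>i. code_dist pS Sa E d k f g i \<le> D i + \<epsilon>)
      \<and> (\<forall>i. \<phi> i (marg_i pS Sa i) (code_recon_marg pS Sa E k f g i) \<le> P i + \<epsilon>))"

(* operational RDP function (infimum in the extended reals; empty inf = \<infinity>) *)
definition R_op where
  "R_op pS Sa Rh E d \<phi> D P = Inf {ereal R | R. achievable pS Sa Rh E d \<phi> R D P}"

end

theory Submission
  imports Defs
begin

(* Every constraint depends on the source only through S_E: the expected distortion of an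
   unobserved modality i is that of the modified distortion hat d_i. So both directions concern
   test channels Q from S_E to hat S.

   Achievability: for a feasible test channel Q and slack delta, draw codewords i.i.d. from the
   output law of Q. A source block is jointly typical with an independent output block with
   probability at least 2^(-k(I + delta)) times its conditional typicality probability, so a
   greedy choice of 2^(k(I + 2 delta)) codewords covers all but a vanishing fraction of the
   source; joint typicality (a Chebyshev bound on finitely many empirical averages) controls the
   distortions and the empirical output marginals, and continuity of phi the perceptions.

   Converse: a code of rate R and block length k induces the test channel of the time-averaged
   joint law of (S_E,j, hat S_j). Its mutual information is at most the average of the
   per-letter ones (log-sum inequality), and the sum of these is at most log N (Gibbs'
   inequality against the backward channels). Letting the slack go to zero, a convergent
   subsequence of these channels (compactness of the simplex) yields a feasible channel of
   mutual information at most R. *)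

section \<open>Information inequalities\<close>

definition kl_term :: "real \<Rightarrow> real \<Rightarrow> real" where
  "kl_term a b = (if a = 0 then 0 else a * ln (a / b))"

definition mi_term :: "real \<Rightarrow> real \<Rightarrow> real \<Rightarrow> real" where
  "mi_term a r c = (if a = 0 then 0 else a * log 2 (a / (r * c)))"

lemma mi_term_kl_term: "mi_term a r c = kl_term a (r * c) / ln 2"
  by (simp add: mi_term_def kl_term_def log_def)

lemma kl_term_scale: "s > 0 \<Longrightarrow> kl_term (s * a) (s * b) = s * kl_term a b"
  by (simp add: kl_term_def)

lemma gibbs_inequality_ln:
  fixes P A :: "'z \<Rightarrow> real"
  assumes fin: "finite Z" and P0: "\<And>z. z \<in> Z \<Longrightarrow> 0 \<le> P z" and P1: "sum P Z = 1"
    and A0: "\<And>z. z \<in> Z \<Longrightarrow> 0 \<le> A z" and PA: "\<And>z. z \<in> Z \<Longrightarrow> 0 < P z \<Longrightarrow> 0 < A z"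
  shows "(\<Sum>z\<in>Z. if P z = 0 then 0 else P z * ln (A z / P z)) \<le> ln (sum A Z)"
proof -
  obtain z0 where z0: "z0 \<in> Z" "P z0 > 0"
    using P0 P1 by (metis less_eq_real_def sum.neutral zero_neq_one)
  define S where "S = sum A Z"
  have "A z0 \<le> S" unfolding S_def using fin A0 z0 by (intro member_le_sum) auto
  with PA[OF z0] have S0: "S > 0" by linarith
  have le: "(if P z = 0 then 0 else P z * ln (A z / P z)) \<le> A z / S - P z + P z * ln S"
    if z: "z \<in> Z" for z
  proof (cases "P z = 0")
    case True
    then show ?thesis using A0[OF z] S0 by simp
  next
    case False
    then have Pp: "P z > 0" using P0[OF z] by simp
    have Ap: "A z > 0" using PA[OF z Pp] .
    have "ln (A z / P z) = ln (A z / (P z * S)) + ln S"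
      using Pp Ap S0 by (simp add: ln_div ln_mult)
    moreover have "ln (A z / (P z * S)) \<le> A z / (P z * S) - 1"
      using Pp Ap S0 by (intro ln_le_minus_one) simp
    ultimately have "P z * ln (A z / P z) \<le> P z * (A z / (P z * S) - 1) + P z * ln S"
      using Pp by (simp add: distrib_left mult_left_mono)
    also have "\<dots> = A z / S - P z + P z * ln S" using Pp S0 by (simp add: field_simps)
    finally show ?thesis using False by simp
  qed
  have "(\<Sum>z\<in>Z. if P z = 0 then 0 else P z * ln (A z / P z)) \<le> (\<Sum>z\<in>Z. A z / S - P z + P z * ln S)"
    by (rule sum_mono) (rule le)
  also have "\<dots> = sum A Z / S - sum P Z + sum P Z * ln S"
    by (simp add: sum.distrib sum_subtractf sum_divide_distrib sum_distrib_right)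
  also have "\<dots> = ln S" using S0 P1 by (simp add: S_def)
  finally show ?thesis by (simp add: S_def)
qed

lemma log_sum_inequality:
  fixes a b :: "'j \<Rightarrow> real"
  assumes fin: "finite K" and a0: "\<And>j. j \<in> K \<Longrightarrow> 0 \<le> a j" and b0: "\<And>j. j \<in> K \<Longrightarrow> 0 \<le> b j"
    and ab: "\<And>j. j \<in> K \<Longrightarrow> 0 < a j \<Longrightarrow> 0 < b j"
  shows "kl_term (sum a K) (sum b K) \<le> (\<Sum>j\<in>K. kl_term (a j) (b j))"
proof (cases "sum a K = 0")
  case True
  then have "\<forall>j\<in>K. a j = 0" using sum_nonneg_eq_0_iff[OF fin] a0 by blast
  then show ?thesis using True by (simp add: kl_term_def)
next
  case False
  define A where "A = sum a K"
  define B where "B = sum b K"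
  have Ap: "A > 0" using False a0 sum_nonneg[of K a] unfolding A_def by force
  obtain j0 where j0: "j0 \<in> K" "a j0 > 0"
    using False a0 by (metis less_eq_real_def sum.neutral)
  have "b j0 \<le> B" unfolding B_def using fin b0 j0 by (intro member_le_sum) auto
  then have Bp: "B > 0" using ab[OF j0] by linarith
  define P where "P j = a j / A" for j
  define C where "C j = b j / B" for j
  have "(\<Sum>j\<in>K. if P j = 0 then 0 else P j * ln (C j / P j)) \<le> ln (sum C K)"
    by (rule gibbs_inequality_ln[OF fin])
      (use a0 b0 ab Ap Bp in \<open>auto simp: P_def C_def sum_divide_distrib[symmetric] A_def B_def zero_less_divide_iff\<close>)
  also have "sum C K = 1" using Bp by (simp add: C_def sum_divide_distrib[symmetric] B_def)
  finally have g: "(\<Sum>j\<in>K. if P j = 0 then 0 else P j * ln (C j / P j)) \<le> 0" by simp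
  have eq: "kl_term (a j) (b j) = a j * ln (A / B) - A * (if P j = 0 then 0 else P j * ln (C j / P j))"
    if j: "j \<in> K" for j
  proof (cases "a j = 0")
    case True then show ?thesis by (simp add: kl_term_def P_def)
  next
    case False
    then have aj: "a j > 0" using a0[OF j] by simp
    have bj: "b j > 0" using ab[OF j aj] .
    have L: "ln (C j / P j) = ln (A / B) - ln (a j / b j)"
      using aj bj Ap Bp unfolding C_def P_def by (simp add: ln_div ln_mult field_simps)
    have PA: "A * P j = a j" using Ap by (simp add: P_def)
    have "a j * ln (A / B) - A * (P j * ln (C j / P j)) = a j * ln (a j / b j)"
      unfolding mult.assoc[symmetric] PA L by (simp add: algebra_simps)
    then show ?thesis using False aj Ap by (simp add: kl_term_def P_def)
  qed
  have "(\<Sum>j\<in>K. kl_term (a j) (b j))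
      = A * ln (A / B) - A * (\<Sum>j\<in>K. if P j = 0 then 0 else P j * ln (C j / P j))"
    by (simp add: eq sum_subtractf sum_distrib_left A_def sum_distrib_right)
  then have "(\<Sum>j\<in>K. kl_term (a j) (b j)) \<ge> A * ln (A / B)"
    using g Ap by (simp add: mult_le_0_iff)
  then show ?thesis using Ap by (simp add: kl_term_def A_def B_def)
qed

section \<open>I.i.d. sequences\<close>

definition seq_space :: "nat \<Rightarrow> 'x set \<Rightarrow> (nat \<Rightarrow> 'x) set" where
  "seq_space k X = Pi\<^sub>E {..<k} (\<lambda>_. X)"

definition iid_prob :: "nat \<Rightarrow> ('x \<Rightarrow> real) \<Rightarrow> (nat \<Rightarrow> 'x) \<Rightarrow> real" where
  "iid_prob k p x = (\<Prod>j<k. p (x j))"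

lemma finite_seq_space: "finite X \<Longrightarrow> finite (seq_space k X)"
  unfolding seq_space_def by (intro finite_PiE) auto

lemma seq_space_letter: "x \<in> seq_space k X \<Longrightarrow> j < k \<Longrightarrow> x j \<in> X"
  unfolding seq_space_def by (auto simp: PiE_iff)

lemma sum_prod_seq_space:
  fixes f :: "nat \<Rightarrow> 'x \<Rightarrow> real"
  assumes "finite X"
  shows "(\<Sum>x\<in>seq_space k X. \<Prod>j<k. f j (x j)) = (\<Prod>j<k. \<Sum>a\<in>X. f j a)"
  unfolding seq_space_def using prod_sum_PiE[of "{..<k}" "\<lambda>_. X" f] assms by simp

lemma sum_sum_prod_seq_space:
  fixes f :: "nat \<Rightarrow> 'x \<Rightarrow> 'y \<Rightarrow> real"
  assumes "finite X" "finite Y"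
  shows "(\<Sum>x\<in>seq_space k X. \<Sum>y\<in>seq_space k Y. \<Prod>j<k. f j (x j) (y j))
       = (\<Prod>j<k. \<Sum>a\<in>X. \<Sum>b\<in>Y. f j a b)"
proof -
  have "(\<Sum>x\<in>seq_space k X. \<Sum>y\<in>seq_space k Y. \<Prod>j<k. f j (x j) (y j))
      = (\<Sum>x\<in>seq_space k X. \<Prod>j<k. \<Sum>b\<in>Y. f j (x j) b)"
    by (intro sum.cong refl sum_prod_seq_space[OF assms(2)])
  also have "\<dots> = (\<Prod>j<k. \<Sum>a\<in>X. \<Sum>b\<in>Y. f j a b)"
    by (rule sum_prod_seq_space[OF assms(1), where f="\<lambda>j a. \<Sum>b\<in>Y. f j a b"])
  finally show ?thesis .
qed

lemma iid_prob_nonneg: "(\<And>a. a \<in> X \<Longrightarrow> 0 \<le> p a) \<Longrightarrow> x \<in> seq_space k X \<Longrightarrow> 0 \<le> iid_prob k p x"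
  unfolding iid_prob_def by (intro prod_nonneg) (auto simp: seq_space_letter)

lemma sum_iid_prob:
  assumes "finite X" "sum p X = 1"
  shows "sum (iid_prob k p) (seq_space k X) = 1"
  unfolding iid_prob_def using sum_prod_seq_space[of X "\<lambda>_. p" k] assms by simp

lemma iid_prob_remove: "j < k \<Longrightarrow> iid_prob k p x = (\<Prod>l\<in>{..<k}-{j}. p (x l)) * p (x j)"
  unfolding iid_prob_def by (subst prod.remove[of _ j]) auto

lemma iid_prob_letter_marginal:
  assumes fin: "finite X" and p1: "sum p X = 1" and j: "j < k"
  shows "(\<Sum>x\<in>seq_space k X. if x j = a then iid_prob k p x else 0) = (if a \<in> X then p a else 0)"
proof -
  define f where "f l v = (if l = j then (if v = a then p v else 0) else p v)" for l v
  have "(if x j = a then iid_prob k p x else 0) = (\<Prod>l<k. f l (x l))" for x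
  proof -
    have "(\<Prod>l\<in>{..<k}-{j}. f l (x l)) = (\<Prod>l\<in>{..<k}-{j}. p (x l))"
      by (rule prod.cong) (auto simp: f_def)
    then show ?thesis using j by (simp add: iid_prob_remove prod.remove[of "{..<k}" j] f_def)
  qed
  then have "(\<Sum>x\<in>seq_space k X. if x j = a then iid_prob k p x else 0) = (\<Prod>l<k. \<Sum>v\<in>X. f l v)"
    by (simp add: sum_prod_seq_space[OF fin])
  also have "\<dots> = (\<Sum>v\<in>X. f j v) * (\<Prod>l\<in>{..<k}-{j}. \<Sum>v\<in>X. f l v)"
    using j by (subst prod.remove[of _ j]) auto
  also have "(\<Prod>l\<in>{..<k}-{j}. \<Sum>v\<in>X. f l v) = 1"
    using p1 by (intro prod.neutral) (auto simp: f_def)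
  also have "(\<Sum>v\<in>X. f j v) = (\<Sum>v\<in>X. if v = a then p a else 0)"
    by (intro sum.cong refl) (simp add: f_def)
  also have "\<dots> = (if a \<in> X then p a else 0)"
    using fin by (simp add: sum.delta')
  finally show ?thesis by simp
qed

section \<open>The converse for a single block code\<close>

locale block_code =
  fixes X :: "'x set" and Y :: "'y set" and p :: "'x \<Rightarrow> real"
    and k N :: nat and F :: "(nat \<Rightarrow> 'x) \<Rightarrow> nat" and G :: "nat \<Rightarrow> nat \<Rightarrow> 'y"
  assumes finite_X: "finite X" and finite_Y: "finite Y" and p_nonneg: "\<And>a. a \<in> X \<Longrightarrow> 0 \<le> p a"
    and sum_p: "sum p X = 1" and k_pos: "k > 0"
    and F_less: "\<And>x. x \<in> seq_space k X \<Longrightarrow> F x < N"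
    and G_in: "\<And>m j. m < N \<Longrightarrow> j < k \<Longrightarrow> G m j \<in> Y"
begin

abbreviation "Xk \<equiv> seq_space k X"

definition letter_joint :: "nat \<Rightarrow> 'x \<Rightarrow> 'y \<Rightarrow> real" where
  "letter_joint j a b = (\<Sum>x\<in>Xk. if x j = a \<and> G (F x) j = b then iid_prob k p x else 0)"

definition letter_out :: "nat \<Rightarrow> 'y \<Rightarrow> real" where
  "letter_out j b = (\<Sum>a\<in>X. letter_joint j a b)"

definition avg_joint :: "'x \<Rightarrow> 'y \<Rightarrow> real" where
  "avg_joint a b = (1 / real k) * (\<Sum>j<k. letter_joint j a b)"

lemma finite_Xk: "finite Xk" using finite_X by (rule finite_seq_space)

lemma iid_prob_Xk_nonneg: "x \<in> Xk \<Longrightarrow> 0 \<le> iid_prob k p x" using p_nonneg by (rule iid_prob_nonneg)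

lemma letter_joint_nonneg: "0 \<le> letter_joint j a b"
  unfolding letter_joint_def by (intro sum_nonneg) (auto simp: iid_prob_Xk_nonneg)

lemma letter_out_nonneg: "0 \<le> letter_out j b"
  unfolding letter_out_def by (intro sum_nonneg letter_joint_nonneg)

lemma sum_letter_joint_weighted:
  assumes j: "j < k"
  shows "(\<Sum>a\<in>X. \<Sum>b\<in>Y. letter_joint j a b * L a b) = (\<Sum>x\<in>Xk. iid_prob k p x * L (x j) (G (F x) j))"
proof -
  have "(\<Sum>a\<in>X. \<Sum>b\<in>Y. letter_joint j a b * L a b)
      = (\<Sum>a\<in>X. \<Sum>b\<in>Y. \<Sum>x\<in>Xk. if x j = a \<and> G (F x) j = b then iid_prob k p x * L a b else 0)"
    unfolding letter_joint_def sum_distrib_right by (intro sum.cong refl) auto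
  also have "\<dots> = (\<Sum>x\<in>Xk. \<Sum>a\<in>X. \<Sum>b\<in>Y. if x j = a \<and> G (F x) j = b then iid_prob k p x * L a b else 0)"
    by (subst sum.swap, rule sum.cong[OF refl], rule sum.swap)
  also have "\<dots> = (\<Sum>x\<in>Xk. iid_prob k p x * L (x j) (G (F x) j))"
  proof (rule sum.cong[OF refl])
    fix x assume x: "x \<in> Xk"
    have xj: "x j \<in> X" using seq_space_letter[OF x j] .
    have yj: "G (F x) j \<in> Y" using G_in[OF F_less[OF x] j] .
    have "(\<Sum>a\<in>X. \<Sum>b\<in>Y. if x j = a \<and> G (F x) j = b then iid_prob k p x * L a b else 0)
        = (\<Sum>a\<in>X. if x j = a then (\<Sum>b\<in>Y. if G (F x) j = b then iid_prob k p x * L a b else 0) else 0)"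
      by (intro sum.cong refl) auto
    also have "\<dots> = iid_prob k p x * L (x j) (G (F x) j)"
      using finite_X finite_Y xj yj by (simp add: sum.delta)
    finally show "(\<Sum>a\<in>X. \<Sum>b\<in>Y. if x j = a \<and> G (F x) j = b then iid_prob k p x * L a b else 0)
        = iid_prob k p x * L (x j) (G (F x) j)" .
  qed
  finally show ?thesis .
qed

lemma letter_joint_row:
  assumes j: "j < k" and a: "a \<in> X"
  shows "(\<Sum>b\<in>Y. letter_joint j a b) = p a"
proof -
  have "(\<Sum>b\<in>Y. letter_joint j a b)
      = (\<Sum>x\<in>Xk. \<Sum>b\<in>Y. if x j = a \<and> G (F x) j = b then iid_prob k p x else 0)"
    unfolding letter_joint_def by (rule sum.swap)
  also have "\<dots> = (\<Sum>x\<in>Xk. if x j = a then iid_prob k p x else 0)"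
  proof (rule sum.cong[OF refl])
    fix x assume x: "x \<in> Xk"
    show "(\<Sum>b\<in>Y. if x j = a \<and> G (F x) j = b then iid_prob k p x else 0) = (if x j = a then iid_prob k p x else 0)"
      using finite_Y G_in[OF F_less[OF x] j] by (auto simp: sum.delta)
  qed
  also have "\<dots> = p a" using iid_prob_letter_marginal[OF finite_X sum_p j] a by simp
  finally show ?thesis .
qed

lemma letter_joint_le_source:
  assumes "j < k" "a \<in> X" "b \<in> Y"
  shows "letter_joint j a b \<le> p a"
proof -
  have "letter_joint j a b \<le> (\<Sum>b\<in>Y. letter_joint j a b)"
    using finite_Y assms(3) letter_joint_nonneg by (intro member_le_sum) auto
  then show ?thesis using letter_joint_row[OF assms(1,2)] by simp
qed

lemma letter_joint_le_out: "a \<in> X \<Longrightarrow> letter_joint j a b \<le> letter_out j b"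
  unfolding letter_out_def using finite_X letter_joint_nonneg by (intro member_le_sum) auto

lemma iid_prob_le_letter_joint:
  assumes x: "x \<in> Xk"
  shows "iid_prob k p x \<le> letter_joint j (x j) (G (F x) j)"
proof -
  have "(\<lambda>x'. if x' j = x j \<and> G (F x') j = G (F x) j then iid_prob k p x' else 0) x
     \<le> (\<Sum>x'\<in>Xk. if x' j = x j \<and> G (F x') j = G (F x) j then iid_prob k p x' else 0)"
    using finite_Xk x iid_prob_Xk_nonneg by (intro member_le_sum) auto
  then show ?thesis unfolding letter_joint_def by simp
qed

lemma letter_joint_outside: "j < k \<Longrightarrow> b \<notin> Y \<Longrightarrow> letter_joint j a b = 0"
  unfolding letter_joint_def using G_in F_less by (intro sum.neutral) fastforce

lemma letter_terms_pos:
  assumes x: "x \<in> Xk" and pos: "iid_prob k p x > 0" and j: "j < k"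
  shows "0 < letter_joint j (x j) (G (F x) j)" "0 < letter_out j (G (F x) j)" "0 < p (x j)"
proof -
  show W: "0 < letter_joint j (x j) (G (F x) j)" using iid_prob_le_letter_joint[OF x, of j] pos by linarith
  show "0 < letter_out j (G (F x) j)"
    using letter_joint_le_out[OF seq_space_letter[OF x j]] W by (meson less_le_trans)
  show "0 < p (x j)"
    using letter_joint_le_source[OF j seq_space_letter[OF x j] G_in[OF F_less[OF x] j]] W by linarith
qed

lemma avg_joint_nonneg: "0 \<le> avg_joint a b"
  unfolding avg_joint_def by (intro mult_nonneg_nonneg sum_nonneg letter_joint_nonneg) simp

lemma avg_joint_outside: "b \<notin> Y \<Longrightarrow> avg_joint a b = 0"
  unfolding avg_joint_def by (simp add: letter_joint_outside)

lemma avg_joint_row: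
  assumes a: "a \<in> X"
  shows "(\<Sum>b\<in>Y. avg_joint a b) = p a"
proof -
  have "(\<Sum>b\<in>Y. avg_joint a b) = (1 / real k) * (\<Sum>j<k. \<Sum>b\<in>Y. letter_joint j a b)"
    unfolding avg_joint_def sum_distrib_left[symmetric] by (subst sum.swap) (rule refl)
  also have "\<dots> = (1 / real k) * (\<Sum>j<k. p a)" using a by (simp add: letter_joint_row)
  finally show ?thesis using k_pos by simp
qed

lemma avg_joint_col: "(\<Sum>a\<in>X. avg_joint a b) = (1 / real k) * (\<Sum>j<k. letter_out j b)"
  unfolding avg_joint_def letter_out_def sum_distrib_left[symmetric] by (subst sum.swap) (rule refl)

lemma sum_avg_joint_weighted:
  "(\<Sum>a\<in>X. \<Sum>b\<in>Y. avg_joint a b * L a b)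
     = (1 / real k) * (\<Sum>j<k. \<Sum>x\<in>Xk. iid_prob k p x * L (x j) (G (F x) j))"
proof -
  have "(\<Sum>a\<in>X. \<Sum>b\<in>Y. avg_joint a b * L a b)
      = (1 / real k) * (\<Sum>a\<in>X. \<Sum>b\<in>Y. \<Sum>j<k. letter_joint j a b * L a b)"
    unfolding avg_joint_def by (simp add: sum_distrib_left sum_distrib_right mult.assoc)
  also have "(\<Sum>a\<in>X. \<Sum>b\<in>Y. \<Sum>j<k. letter_joint j a b * L a b)
      = (\<Sum>j<k. \<Sum>a\<in>X. \<Sum>b\<in>Y. letter_joint j a b * L a b)"
    by (subst sum.swap, rule sum.cong[OF refl], rule sum.swap)
  also have "\<dots> = (\<Sum>j<k. \<Sum>x\<in>Xk. iid_prob k p x * L (x j) (G (F x) j))"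
    by (intro sum.cong refl sum_letter_joint_weighted) auto
  finally show ?thesis .
qed

lemma mutual_info_avg_joint_le_avg:
  "mutual_info X Y avg_joint \<le> (1 / real k) * (\<Sum>j<k. mutual_info X Y (letter_joint j))"
proof -
  have pt: "mi_term (avg_joint a b) (p a) ((1 / real k) * (\<Sum>j<k. letter_out j b))
      \<le> (1 / real k) * (\<Sum>j<k. mi_term (letter_joint j a b) (p a) (letter_out j b))"
    if a: "a \<in> X" and b: "b \<in> Y" for a b
  proof -
    have le: "kl_term (\<Sum>j<k. letter_joint j a b) (\<Sum>j<k. p a * letter_out j b)
        \<le> (\<Sum>j<k. kl_term (letter_joint j a b) (p a * letter_out j b))"
    proof (rule log_sum_inequality)
      fix j assume j: "j \<in> {..<k}"
      show "0 \<le> letter_joint j a b" by (rule letter_joint_nonneg)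
      show "0 \<le> p a * letter_out j b" using p_nonneg[OF a] letter_out_nonneg by simp
      assume "0 < letter_joint j a b"
      then show "0 < p a * letter_out j b"
        using letter_joint_le_source[of j a b] letter_joint_le_out[OF a, of j b] j a b
        by (auto intro: mult_pos_pos)
    qed simp
    have "kl_term (avg_joint a b) (p a * ((1 / real k) * (\<Sum>j<k. letter_out j b)))
        = kl_term ((1 / real k) * (\<Sum>j<k. letter_joint j a b)) ((1 / real k) * (\<Sum>j<k. p a * letter_out j b))"
      unfolding avg_joint_def by (simp add: sum_distrib_left mult.left_commute)
    also have "\<dots> = (1 / real k) * kl_term (\<Sum>j<k. letter_joint j a b) (\<Sum>j<k. p a * letter_out j b)"
      by (rule kl_term_scale) (simp add: k_pos)
    finally have "kl_term (avg_joint a b) (p a * ((1 / real k) * (\<Sum>j<k. letter_out j b)))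
        \<le> (1 / real k) * (\<Sum>j<k. kl_term (letter_joint j a b) (p a * letter_out j b))"
      by (rule ord_eq_le_trans) (rule mult_left_mono[OF le], simp)
    then have "kl_term (avg_joint a b) (p a * ((1 / real k) * (\<Sum>j<k. letter_out j b))) / ln 2
        \<le> ((1 / real k) * (\<Sum>j<k. kl_term (letter_joint j a b) (p a * letter_out j b))) / ln 2"
      by (rule divide_right_mono) simp
    then show ?thesis unfolding mi_term_kl_term sum_divide_distrib[symmetric] by (simp add: mult.commute)
  qed
  have "mutual_info X Y avg_joint
      = (\<Sum>a\<in>X. \<Sum>b\<in>Y. mi_term (avg_joint a b) (p a) ((1 / real k) * (\<Sum>j<k. letter_out j b)))"
    unfolding mutual_info_def mi_term_def by (intro sum.cong refl) (simp only: avg_joint_row avg_joint_col)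
  also have "\<dots> \<le> (\<Sum>a\<in>X. \<Sum>b\<in>Y. (1 / real k) * (\<Sum>j<k. mi_term (letter_joint j a b) (p a) (letter_out j b)))"
    by (intro sum_mono pt)
  also have "\<dots> = (1 / real k) * (\<Sum>j<k. \<Sum>a\<in>X. \<Sum>b\<in>Y. mi_term (letter_joint j a b) (p a) (letter_out j b))"
    unfolding sum_distrib_left by (subst sum.swap, rule sum.cong[OF refl], rule sum.swap)
  also have "(\<Sum>j<k. \<Sum>a\<in>X. \<Sum>b\<in>Y. mi_term (letter_joint j a b) (p a) (letter_out j b))
      = (\<Sum>j<k. mutual_info X Y (letter_joint j))"
    unfolding mutual_info_def mi_term_def letter_out_def by (intro sum.cong refl) (simp add: letter_joint_row)
  finally show ?thesis .
qed

definition backward :: "nat \<Rightarrow> 'x \<Rightarrow> 'y \<Rightarrow> real" where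
  "backward j a b = letter_joint j a b / letter_out j b"

definition backward_prod :: "(nat \<Rightarrow> 'x) \<Rightarrow> real" where
  "backward_prod x = (\<Prod>j<k. backward j (x j) (G (F x) j))"

lemma backward_nonneg: "0 \<le> backward j a b"
  unfolding backward_def using letter_joint_nonneg letter_out_nonneg by simp

lemma backward_prod_nonneg: "0 \<le> backward_prod x"
  unfolding backward_prod_def by (intro prod_nonneg backward_nonneg)

lemma backward_prod_pos: "x \<in> Xk \<Longrightarrow> iid_prob k p x > 0 \<Longrightarrow> backward_prod x > 0"
  unfolding backward_prod_def backward_def using letter_terms_pos by (intro prod_pos) auto

lemma letter_mutual_info_ln:
  assumes j: "j < k"
  shows "mutual_info X Y (letter_joint j) * ln 2
       = (\<Sum>x\<in>Xk. iid_prob k p x * ln (backward j (x j) (G (F x) j) / p (x j)))"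
proof -
  define L where "L a b = (if letter_joint j a b = 0 then 0 else ln (backward j a b / p a))" for a b
  have "mutual_info X Y (letter_joint j) = (\<Sum>a\<in>X. \<Sum>b\<in>Y. letter_joint j a b * L a b / ln 2)"
    unfolding mutual_info_def using j
    by (intro sum.cong refl) (simp add: letter_joint_row letter_out_def[symmetric] L_def backward_def log_def mult.commute)
  then have "mutual_info X Y (letter_joint j) * ln 2 = (\<Sum>a\<in>X. \<Sum>b\<in>Y. letter_joint j a b * L a b)"
    by (simp add: sum_divide_distrib[symmetric])
  also have "\<dots> = (\<Sum>x\<in>Xk. iid_prob k p x * L (x j) (G (F x) j))"
    by (rule sum_letter_joint_weighted[OF j])
  also have "\<dots> = (\<Sum>x\<in>Xk. iid_prob k p x * ln (backward j (x j) (G (F x) j) / p (x j)))"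
  proof (rule sum.cong[OF refl])
    fix x assume x: "x \<in> Xk"
    show "iid_prob k p x * L (x j) (G (F x) j) = iid_prob k p x * ln (backward j (x j) (G (F x) j) / p (x j))"
      using iid_prob_le_letter_joint[OF x, of j] iid_prob_Xk_nonneg[OF x] by (auto simp: L_def)
  qed
  finally show ?thesis .
qed

lemma sum_letter_info_ln:
  assumes x: "x \<in> Xk" and pos: "iid_prob k p x > 0"
  shows "(\<Sum>j<k. ln (backward j (x j) (G (F x) j) / p (x j))) = ln (backward_prod x / iid_prob k p x)"
proof -
  have "(\<Sum>j<k. ln (backward j (x j) (G (F x) j) / p (x j)))
      = (\<Sum>j<k. ln (backward j (x j) (G (F x) j)) - ln (p (x j)))"
  proof (rule sum.cong[OF refl])
    fix j assume "j \<in> {..<k}"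
    then have "0 < backward j (x j) (G (F x) j)" "0 < p (x j)"
      using letter_terms_pos[OF x pos] by (auto simp: backward_def)
    then show "ln (backward j (x j) (G (F x) j) / p (x j)) = ln (backward j (x j) (G (F x) j)) - ln (p (x j))"
      by (simp add: ln_div)
  qed
  also have "\<dots> = (\<Sum>j<k. ln (backward j (x j) (G (F x) j))) - (\<Sum>j<k. ln (p (x j)))"
    by (rule sum_subtractf)
  also have "\<dots> = ln (backward_prod x) - ln (iid_prob k p x)"
    unfolding backward_prod_def iid_prob_def using letter_terms_pos[OF x pos]
    by (subst (1 2) ln_prod) (fastforce simp: backward_def)+
  also have "\<dots> = ln (backward_prod x / iid_prob k p x)"
    using backward_prod_pos[OF x pos] pos by (simp add: ln_div)
  finally show ?thesis .
qed

text \<open>For a fixed message \<open>m\<close>, \<open>\<Prod>j<k. backward j (x j) (G m j)\<close> is a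
  probability distribution on source blocks (or zero), so summing over the \<open>N\<close> messages bounds
  the sum of \<open>backward_prod\<close> by \<open>N\<close>.\<close>

lemma sum_backward_prod_le: "(\<Sum>x\<in>Xk. backward_prod x) \<le> real N"
proof -
  have "(\<Sum>x\<in>Xk. backward_prod x) \<le> (\<Sum>x\<in>Xk. \<Sum>m<N. \<Prod>j<k. backward j (x j) (G m j))"
  proof (rule sum_mono)
    fix x assume x: "x \<in> Xk"
    show "backward_prod x \<le> (\<Sum>m<N. \<Prod>j<k. backward j (x j) (G m j))"
      unfolding backward_prod_def using F_less[OF x]
      by (intro member_le_sum[where f="\<lambda>m. \<Prod>j<k. backward j (x j) (G m j)"])
        (auto intro: prod_nonneg backward_nonneg)
  qed
  also have "\<dots> = (\<Sum>m<N. \<Sum>x\<in>Xk. \<Prod>j<k. backward j (x j) (G m j))" by (rule sum.swap)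
  also have "\<dots> = (\<Sum>m<N. \<Prod>j<k. \<Sum>a\<in>X. backward j a (G m j))"
    by (intro sum.cong refl sum_prod_seq_space finite_X)
  also have "\<dots> \<le> (\<Sum>m<N. 1)"
  proof (intro sum_mono prod_le_1 conjI)
    fix m j
    show "0 \<le> (\<Sum>a\<in>X. backward j a (G m j))" by (intro sum_nonneg backward_nonneg)
    have "(\<Sum>a\<in>X. backward j a (G m j)) = letter_out j (G m j) / letter_out j (G m j)"
      unfolding backward_def letter_out_def by (rule sum_divide_distrib[symmetric])
    then show "(\<Sum>a\<in>X. backward j a (G m j)) \<le> 1" by simp
  qed
  finally show ?thesis by simp
qed

lemma sum_letter_mutual_info_le_log: "(\<Sum>j<k. mutual_info X Y (letter_joint j)) \<le> log 2 (real N)"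
proof -
  have "(\<Sum>j<k. mutual_info X Y (letter_joint j)) * ln 2
      = (\<Sum>x\<in>Xk. \<Sum>j<k. iid_prob k p x * ln (backward j (x j) (G (F x) j) / p (x j)))"
    by (simp add: sum_distrib_right letter_mutual_info_ln sum.swap[of _ Xk])
  also have "\<dots> = (\<Sum>x\<in>Xk. if iid_prob k p x = 0 then 0
                     else iid_prob k p x * ln (backward_prod x / iid_prob k p x))"
  proof (rule sum.cong[OF refl])
    fix x assume x: "x \<in> Xk"
    show "(\<Sum>j<k. iid_prob k p x * ln (backward j (x j) (G (F x) j) / p (x j)))
        = (if iid_prob k p x = 0 then 0 else iid_prob k p x * ln (backward_prod x / iid_prob k p x))"
      using iid_prob_Xk_nonneg[OF x] sum_letter_info_ln[OF x]
      by (simp add: sum_distrib_left[symmetric] less_le)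
  qed
  also have "\<dots> \<le> ln (\<Sum>x\<in>Xk. backward_prod x)"
    using finite_Xk sum_iid_prob[OF finite_X sum_p] iid_prob_Xk_nonneg backward_prod_nonneg backward_prod_pos
    by (intro gibbs_inequality_ln) auto
  also have "\<dots> \<le> ln (real N)"
  proof -
    obtain x where x: "x \<in> Xk" "iid_prob k p x \<noteq> 0"
      using sum_iid_prob[OF finite_X sum_p] by (metis sum.neutral zero_neq_one)
    then have "0 < backward_prod x"
      using iid_prob_Xk_nonneg backward_prod_pos by (simp add: order_le_neq_trans)
    also have "backward_prod x \<le> (\<Sum>x\<in>Xk. backward_prod x)"
      using finite_Xk x by (intro member_le_sum backward_prod_nonneg)
    finally show ?thesis using sum_backward_prod_le by simp
  qed
  finally show ?thesis by (simp add: log_def pos_le_divide_eq)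
qed

theorem mutual_info_avg_joint_le_rate: "mutual_info X Y avg_joint \<le> log 2 (real N) / real k"
proof -
  have "mutual_info X Y avg_joint \<le> (1 / real k) * (\<Sum>j<k. mutual_info X Y (letter_joint j))"
    by (rule mutual_info_avg_joint_le_avg)
  also have "\<dots> \<le> (1 / real k) * log 2 (real N)"
    by (intro mult_left_mono sum_letter_mutual_info_le_log) simp
  finally show ?thesis by simp
qed

end

section \<open>Reduction to the observed source\<close>

locale rdp_setting =
  fixes pS :: "('i::finite \<Rightarrow> 'a) \<Rightarrow> real" and Sa :: "'i \<Rightarrow> 'a set" and Rh :: "'i \<Rightarrow> 'b set"
    and E :: "'i set" and d :: "'i \<Rightarrow> 'a \<Rightarrow> 'b \<Rightarrow> real"
  assumes fin_S: "\<And>i. finite (Sa i)" and fin_R: "\<And>i. finite (Rh i)" and ne_R: "\<And>i. Rh i \<noteq> {}"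
    and pmf: "pS \<in> prob_simplex (Pi\<^sub>E UNIV Sa)"
    and d_nonneg: "\<And>i a b. a \<in> Sa i \<Longrightarrow> b \<in> Rh i \<Longrightarrow> 0 \<le> d i a b"
begin

abbreviation "US \<equiv> Pi\<^sub>E (UNIV::'i set) Sa"
abbreviation "XS \<equiv> Pi\<^sub>E E Sa"
abbreviation "YS \<equiv> Pi\<^sub>E (UNIV::'i set) Rh"
abbreviation "pE \<equiv> marg_E pS Sa E"

definition fiber :: "('i \<Rightarrow> 'a) \<Rightarrow> ('i \<Rightarrow> 'a) set" where
  "fiber x = {a \<in> US. restrict a E = x}"

text \<open>Through it every
  constraint of the problem becomes a function of the pair \<open>(S\<^sub>E, hat S)\<close>.\<close>

definition eff_dist :: "'i \<Rightarrow> ('i \<Rightarrow> 'a) \<Rightarrow> 'b \<Rightarrow> real" where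
  "eff_dist i x b = (if i \<in> E then d i (x i) b else hat_d pS Sa E d i x b)"

lemma finite_US: "finite US" by (intro finite_PiE fin_S) simp
lemma finite_XS: "finite XS" by (intro finite_PiE fin_S) simp
lemma finite_YS: "finite YS" by (intro finite_PiE fin_R) simp

lemma pS_nonneg: "0 \<le> pS a" using pmf by (simp add: prob_simplex_def)
lemma sum_pS: "sum pS US = 1" using pmf by (simp add: prob_simplex_def)

lemma pE_eq_sum_fiber: "pE x = sum pS (fiber x)"
  unfolding marg_E_def fiber_def using finite_US by (simp add: sum.inter_filter)

lemma pE_nonneg: "0 \<le> pE x" unfolding pE_eq_sum_fiber by (intro sum_nonneg pS_nonneg)

lemma sum_US_by_fiber: "(\<Sum>a\<in>US. h a) = (\<Sum>x\<in>XS. \<Sum>a\<in>fiber x. h a)"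
  unfolding fiber_def
  by (rule sum.group[symmetric, OF finite_US finite_XS]) auto

lemma sum_pE: "sum pE XS = 1"
  using sum_pS unfolding pE_eq_sum_fiber sum_US_by_fiber[of pS] by simp

lemma cond_numerator_le:
  "(\<Sum>s\<in>US. if s i = a \<and> restrict s E = x then pS s else 0) \<le> pE x"
  unfolding marg_E_def by (intro sum_mono) (auto simp: pS_nonneg)

lemma pE_mult_cond_i: "pE x * cond_i pS Sa E i a x = (\<Sum>s\<in>US. if s i = a \<and> restrict s E = x then pS s else 0)"
proof (cases "pE x = 0")
  case True
  have "0 \<le> (\<Sum>s\<in>US. if s i = a \<and> restrict s E = x then pS s else 0)" by (intro sum_nonneg) (auto simp: pS_nonneg)
  then show ?thesis using True cond_numerator_le[of i a x] by simp
next
  case False then show ?thesis by (simp add: cond_i_def)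
qed

lemma sum_fiber_dist:
  assumes x: "x \<in> XS"
  shows "(\<Sum>a\<in>fiber x. pS a * d i (a i) b) = pE x * eff_dist i x b"
proof (cases "i \<in> E")
  case True
  have "(\<Sum>a\<in>fiber x. pS a * d i (a i) b) = (\<Sum>a\<in>fiber x. pS a * d i (x i) b)"
  proof (rule sum.cong[OF refl])
    fix a assume "a \<in> fiber x"
    then have "restrict a E = x" by (simp add: fiber_def)
    then have "a i = x i" using True by (metis restrict_apply')
    then show "pS a * d i (a i) b = pS a * d i (x i) b" by simp
  qed
  also have "\<dots> = pE x * eff_dist i x b" using True by (simp add: eff_dist_def pE_eq_sum_fiber sum_distrib_right)
  finally show ?thesis .
next
  case False
  have "pE x * eff_dist i x b = (\<Sum>a'\<in>Sa i. (pE x * cond_i pS Sa E i a' x) * d i a' b)"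
    using False by (simp add: eff_dist_def hat_d_def sum_distrib_left mult.assoc)
  also have "\<dots> = (\<Sum>a'\<in>Sa i. \<Sum>s\<in>US. if s i = a' \<and> restrict s E = x then pS s * d i a' b else 0)"
    unfolding pE_mult_cond_i sum_distrib_right by (intro sum.cong refl) auto
  also have "\<dots> = (\<Sum>s\<in>US. \<Sum>a'\<in>Sa i. if s i = a' \<and> restrict s E = x then pS s * d i a' b else 0)"
    by (rule sum.swap)
  also have "\<dots> = (\<Sum>s\<in>US. if restrict s E = x then pS s * d i (s i) b else 0)"
  proof (rule sum.cong[OF refl])
    fix s assume s: "s \<in> US"
    then have "s i \<in> Sa i" by auto
    then show "(\<Sum>a'\<in>Sa i. if s i = a' \<and> restrict s E = x then pS s * d i a' b else 0) = (if restrict s E = x then pS s * d i (s i) b else 0)"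
      using fin_S[of i] by (auto simp: sum.delta)
  qed
  also have "\<dots> = (\<Sum>a\<in>fiber x. pS a * d i (a i) b)"
    unfolding fiber_def using finite_US by (simp add: sum.inter_filter)
  finally show ?thesis by simp
qed

lemma hat_d_nonneg: "0 \<le> hat_d pS Sa E d i x b" if "b \<in> Rh i"
proof -
  have "0 \<le> cond_i pS Sa E i a x" for a
    unfolding cond_i_def using pE_nonneg[of x] by (auto intro!: divide_nonneg_nonneg sum_nonneg simp: pS_nonneg)
  then show ?thesis unfolding hat_d_def using d_nonneg that by (auto intro!: sum_nonneg)
qed

lemma eff_dist_nonneg: "x \<in> XS \<Longrightarrow> b \<in> Rh i \<Longrightarrow> 0 \<le> eff_dist i x b"
  unfolding eff_dist_def using d_nonneg hat_d_nonneg by (auto simp: PiE_iff)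

definition exp_eff_dist :: "(('i \<Rightarrow> 'a) \<Rightarrow> ('i \<Rightarrow> 'b) \<Rightarrow> real) \<Rightarrow> 'i \<Rightarrow> real" where
  "exp_eff_dist Q i = (\<Sum>x\<in>XS. \<Sum>t\<in>YS. pE x * Q x t * eff_dist i x (t i))"

definition out_marg :: "(('i \<Rightarrow> 'a) \<Rightarrow> ('i \<Rightarrow> 'b) \<Rightarrow> real) \<Rightarrow> 'i \<Rightarrow> 'b \<Rightarrow> real" where
  "out_marg Q i b = (\<Sum>x\<in>XS. \<Sum>t\<in>YS. if t i = b then pE x * Q x t else 0)"

lemma exp_dist_eq_exp_eff_dist: "i \<in> E \<Longrightarrow> exp_dist pS Sa Rh E Q d i = exp_eff_dist Q i"
proof -
  assume i: "i \<in> E"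
  have "exp_dist pS Sa Rh E Q d i = (\<Sum>x\<in>XS. \<Sum>a\<in>fiber x. \<Sum>t\<in>YS. pS a * Q (restrict a E) t * d i (a i) (t i))"
    unfolding exp_dist_def by (rule sum_US_by_fiber)
  also have "\<dots> = (\<Sum>x\<in>XS. \<Sum>t\<in>YS. Q x t * (\<Sum>a\<in>fiber x. pS a * d i (a i) (t i)))"
  proof (intro sum.cong refl)
    fix x assume x: "x \<in> XS"
    have "(\<Sum>a\<in>fiber x. \<Sum>t\<in>YS. pS a * Q (restrict a E) t * d i (a i) (t i)) = (\<Sum>a\<in>fiber x. \<Sum>t\<in>YS. Q x t * (pS a * d i (a i) (t i)))"
      by (intro sum.cong refl) (auto simp: fiber_def)
    also have "\<dots> = (\<Sum>t\<in>YS. Q x t * (\<Sum>a\<in>fiber x. pS a * d i (a i) (t i)))"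
      by (subst sum.swap) (simp add: sum_distrib_left)
    finally show "(\<Sum>a\<in>fiber x. \<Sum>t\<in>YS. pS a * Q (restrict a E) t * d i (a i) (t i)) = (\<Sum>t\<in>YS. Q x t * (\<Sum>a\<in>fiber x. pS a * d i (a i) (t i)))" .
  qed
  also have "\<dots> = exp_eff_dist Q i"
    unfolding exp_eff_dist_def by (intro sum.cong refl) (simp add: sum_fiber_dist)
  finally show ?thesis .
qed

lemma exp_hat_dist_eq_exp_eff_dist: "i \<notin> E \<Longrightarrow> exp_hat_dist pS Sa Rh E Q d i = exp_eff_dist Q i"
  unfolding exp_hat_dist_def exp_eff_dist_def eff_dist_def by simp

lemma recon_marg_eq_out_marg: "recon_marg pS Sa Rh E Q i b = out_marg Q i b"
proof -
  have "recon_marg pS Sa Rh E Q i b = (\<Sum>x\<in>XS. \<Sum>a\<in>fiber x. \<Sum>t\<in>YS. if t i = b then pS a * Q (restrict a E) t else 0)"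
    unfolding recon_marg_def by (rule sum_US_by_fiber)
  also have "\<dots> = (\<Sum>x\<in>XS. \<Sum>a\<in>fiber x. \<Sum>t\<in>YS. if t i = b then pS a * Q x t else 0)"
    by (intro sum.cong refl) (auto simp: fiber_def)
  also have "\<dots> = (\<Sum>x\<in>XS. \<Sum>t\<in>YS. \<Sum>a\<in>fiber x. if t i = b then pS a * Q x t else 0)"
    by (intro sum.cong refl sum.swap)
  also have "\<dots> = out_marg Q i b"
    unfolding out_marg_def pE_eq_sum_fiber by (intro sum.cong refl) (simp add: sum_distrib_right)
  finally show ?thesis .
qed

lemma seqs_eq_seq_space: "seqs Sa k = seq_space k US" by (simp add: seqs_def seq_space_def)
lemma seq_prob_eq_iid_prob: "seq_prob pS k s = iid_prob k pS s" by (simp add: seq_prob_def iid_prob_def)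

lemma enc_input_in_seq_space: "s \<in> seqs Sa k \<Longrightarrow> enc_input E k s \<in> seq_space k XS"
  unfolding seqs_def seq_space_def enc_input_def by (auto simp: PiE_iff)

lemma enc_input_preimage:
  assumes x: "x \<in> seq_space k XS"
  shows "{s \<in> seqs Sa k. enc_input E k s = x} = Pi\<^sub>E {..<k} (\<lambda>l. fiber (x l))"
proof (intro set_eqI iffI)
  fix s assume "s \<in> {s \<in> seqs Sa k. enc_input E k s = x}"
  then have s: "s \<in> seqs Sa k" and e: "enc_input E k s = x" by auto
  have "restrict (s l) E = x l" if "l < k" for l
    using e that unfolding enc_input_def by (metis lessThan_iff restrict_apply')
  then show "s \<in> Pi\<^sub>E {..<k} (\<lambda>l. fiber (x l))"
    using s unfolding seqs_def fiber_def by (auto simp: PiE_iff)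
next
  fix s assume s: "s \<in> Pi\<^sub>E {..<k} (\<lambda>l. fiber (x l))"
  then have "s \<in> seqs Sa k" unfolding seqs_def fiber_def by (auto simp: PiE_iff)
  moreover have "enc_input E k s = x"
  proof
    fix l show "enc_input E k s l = x l"
    proof (cases "l < k")
      case True then show ?thesis using s unfolding enc_input_def fiber_def by (auto simp: PiE_iff)
    next
      case False then show ?thesis using x unfolding enc_input_def seq_space_def by (auto simp: PiE_iff extensional_def)
    qed
  qed
  ultimately show "s \<in> {s \<in> seqs Sa k. enc_input E k s = x}" by simp
qed

lemma finite_fiber: "finite (fiber x)" unfolding fiber_def using finite_US by simp

lemma sum_seqs_group_enc_input:
  fixes h :: "nat \<Rightarrow> ('i \<Rightarrow> 'a) \<Rightarrow> (nat \<Rightarrow> 'i \<Rightarrow> 'a) \<Rightarrow> real"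
  shows "(\<Sum>s\<in>seqs Sa k. (\<Prod>l<k. h l (s l) (enc_input E k s)) * \<Phi> (enc_input E k s))
   = (\<Sum>x\<in>seq_space k XS. (\<Prod>l<k. \<Sum>a\<in>fiber (x l). h l a x) * \<Phi> x)"
proof -
  have fs: "finite (seqs Sa k)" unfolding seqs_eq_seq_space by (rule finite_seq_space[OF finite_US])
  have "(\<Sum>s\<in>seqs Sa k. (\<Prod>l<k. h l (s l) (enc_input E k s)) * \<Phi> (enc_input E k s))
      = (\<Sum>x\<in>seq_space k XS. \<Sum>s\<in>{s \<in> seqs Sa k. enc_input E k s = x}. (\<Prod>l<k. h l (s l) (enc_input E k s)) * \<Phi> (enc_input E k s))"
    by (rule sum.group[symmetric, OF fs finite_seq_space[OF finite_XS]]) (auto intro: enc_input_in_seq_space)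
  also have "\<dots> = (\<Sum>x\<in>seq_space k XS. \<Sum>s\<in>Pi\<^sub>E {..<k} (\<lambda>l. fiber (x l)). (\<Prod>l<k. h l (s l) x) * \<Phi> x)"
  proof (rule sum.cong[OF refl])
    fix x assume x: "x \<in> seq_space k XS"
    show "(\<Sum>s\<in>{s \<in> seqs Sa k. enc_input E k s = x}. (\<Prod>l<k. h l (s l) (enc_input E k s)) * \<Phi> (enc_input E k s))
        = (\<Sum>s\<in>Pi\<^sub>E {..<k} (\<lambda>l. fiber (x l)). (\<Prod>l<k. h l (s l) x) * \<Phi> x)"
      unfolding enc_input_preimage[OF x, symmetric] by (intro sum.cong refl) auto
  qed
  also have "\<dots> = (\<Sum>x\<in>seq_space k XS. (\<Prod>l<k. \<Sum>a\<in>fiber (x l). h l a x) * \<Phi> x)"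
  proof (rule sum.cong[OF refl])
    fix x assume "x \<in> seq_space k XS"
    have "(\<Sum>s\<in>Pi\<^sub>E {..<k} (\<lambda>l. fiber (x l)). \<Prod>l<k. h l (s l) x) = (\<Prod>l<k. \<Sum>a\<in>fiber (x l). h l a x)"
      using prod_sum_PiE[where A="{..<k}" and B="\<lambda>l. fiber (x l)" and f="\<lambda>l a. h l a x"] by (simp add: finite_fiber)
    then show "(\<Sum>s\<in>Pi\<^sub>E {..<k} (\<lambda>l. fiber (x l)). (\<Prod>l<k. h l (s l) x) * \<Phi> x) = (\<Prod>l<k. \<Sum>a\<in>fiber (x l). h l a x) * \<Phi> x"
      by (simp add: sum_distrib_right[symmetric])
  qed
  finally show ?thesis .
qed

lemma sum_seqs_enc_input:
  "(\<Sum>s\<in>seqs Sa k. seq_prob pS k s * \<Phi> (enc_input E k s)) = (\<Sum>x\<in>seq_space k XS. iid_prob k pE x * \<Phi> x)"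
  using sum_seqs_group_enc_input[where k=k and h="\<lambda>_ a _. pS a" and \<Phi>=\<Phi>] unfolding seq_prob_eq_iid_prob iid_prob_def pE_eq_sum_fiber by simp

lemma sum_seqs_letter_enc_input:
  assumes j: "j < k"
  shows "(\<Sum>s\<in>seqs Sa k. seq_prob pS k s * \<Psi> (s j) (enc_input E k s))
    = (\<Sum>x\<in>seq_space k XS. (\<Prod>l\<in>{..<k}-{j}. pE (x l)) * (\<Sum>a\<in>fiber (x j). pS a * \<Psi> a x))"
proof -
  define h where "h l a x = (if l = j then pS a * \<Psi> a x else pS a)" for l a x
  have "(\<Sum>s\<in>seqs Sa k. seq_prob pS k s * \<Psi> (s j) (enc_input E k s))
      = (\<Sum>s\<in>seqs Sa k. (\<Prod>l<k. h l (s l) (enc_input E k s)) * 1)"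
  proof (rule sum.cong[OF refl])
    fix s assume "s \<in> seqs Sa k"
    have "(\<Prod>l<k. h l (s l) (enc_input E k s)) = h j (s j) (enc_input E k s) * (\<Prod>l\<in>{..<k}-{j}. h l (s l) (enc_input E k s))"
      using j by (subst prod.remove[of _ j]) auto
    also have "(\<Prod>l\<in>{..<k}-{j}. h l (s l) (enc_input E k s)) = (\<Prod>l\<in>{..<k}-{j}. pS (s l))"
      by (intro prod.cong refl) (auto simp: h_def)
    also have "h j (s j) (enc_input E k s) * (\<Prod>l\<in>{..<k}-{j}. pS (s l)) = seq_prob pS k s * \<Psi> (s j) (enc_input E k s)"
      using j by (simp add: h_def seq_prob_def prod.remove[of "{..<k}" j])
    finally show "seq_prob pS k s * \<Psi> (s j) (enc_input E k s) = (\<Prod>l<k. h l (s l) (enc_input E k s)) * 1"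
      by simp
  qed
  also have "\<dots> = (\<Sum>x\<in>seq_space k XS. (\<Prod>l<k. \<Sum>a\<in>fiber (x l). h l a x) * 1)"
    by (rule sum_seqs_group_enc_input)
  also have "\<dots> = (\<Sum>x\<in>seq_space k XS. (\<Prod>l\<in>{..<k}-{j}. pE (x l)) * (\<Sum>a\<in>fiber (x j). pS a * \<Psi> a x))"
  proof (rule sum.cong[OF refl])
    fix x assume "x \<in> seq_space k XS"
    have "(\<Prod>l<k. \<Sum>a\<in>fiber (x l). h l a x) = (\<Sum>a\<in>fiber (x j). h j a x) * (\<Prod>l\<in>{..<k}-{j}. \<Sum>a\<in>fiber (x l). h l a x)"
      using j by (subst prod.remove[of _ j]) auto
    also have "(\<Prod>l\<in>{..<k}-{j}. \<Sum>a\<in>fiber (x l). h l a x) = (\<Prod>l\<in>{..<k}-{j}. pE (x l))"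
      by (intro prod.cong refl) (auto simp: h_def pE_eq_sum_fiber)
    finally show "(\<Prod>l<k. \<Sum>a\<in>fiber (x l). h l a x) * 1 = (\<Prod>l\<in>{..<k}-{j}. pE (x l)) * (\<Sum>a\<in>fiber (x j). pS a * \<Psi> a x)"
      by (simp add: h_def)
  qed
  finally show ?thesis .
qed

lemma code_dist_eq_avg:
  assumes k: "k > 0"
  shows "code_dist pS Sa E d k f g i = (1 / real k) * (\<Sum>j<k. \<Sum>x\<in>seq_space k XS. iid_prob k pE x * eff_dist i (x j) (g (f x) j i))"
proof -
  have "code_dist pS Sa E d k f g i = (1 / real k) * (\<Sum>j<k. \<Sum>s\<in>seqs Sa k. seq_prob pS k s * d i (s j i) (g (f (enc_input E k s)) j i))"
    unfolding code_dist_def by (simp add: sum_distrib_left sum_divide_distrib sum.swap[of _ "{..<k}"] mult.commute)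
  also have "(\<Sum>j<k. \<Sum>s\<in>seqs Sa k. seq_prob pS k s * d i (s j i) (g (f (enc_input E k s)) j i))
      = (\<Sum>j<k. \<Sum>x\<in>seq_space k XS. iid_prob k pE x * eff_dist i (x j) (g (f x) j i))"
  proof (rule sum.cong[OF refl])
    fix j assume "j \<in> {..<k}"
    then have j: "j < k" by simp
    have "(\<Sum>s\<in>seqs Sa k. seq_prob pS k s * d i (s j i) (g (f (enc_input E k s)) j i))
       = (\<Sum>x\<in>seq_space k XS. (\<Prod>l\<in>{..<k}-{j}. pE (x l)) * (\<Sum>a\<in>fiber (x j). pS a * d i (a i) (g (f x) j i)))"
      by (rule sum_seqs_letter_enc_input[OF j, of "\<lambda>a x. d i (a i) (g (f x) j i)"])
    also have "\<dots> = (\<Sum>x\<in>seq_space k XS. iid_prob k pE x * eff_dist i (x j) (g (f x) j i))"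
    proof (rule sum.cong[OF refl])
      fix x assume x: "x \<in> seq_space k XS"
      have xj: "x j \<in> XS" using x j by (auto simp: seq_space_def PiE_iff)
      show "(\<Prod>l\<in>{..<k}-{j}. pE (x l)) * (\<Sum>a\<in>fiber (x j). pS a * d i (a i) (g (f x) j i)) = iid_prob k pE x * eff_dist i (x j) (g (f x) j i)"
        unfolding sum_fiber_dist[OF xj] iid_prob_remove[OF j] by simp
    qed
    finally show "(\<Sum>s\<in>seqs Sa k. seq_prob pS k s * d i (s j i) (g (f (enc_input E k s)) j i)) = (\<Sum>x\<in>seq_space k XS. iid_prob k pE x * eff_dist i (x j) (g (f x) j i))" .
  qed
  finally show ?thesis .
qed

lemma code_recon_marg_eq_avg:
  "code_recon_marg pS Sa E k f g i b = (1 / real k) * (\<Sum>j<k. \<Sum>x\<in>seq_space k XS. iid_prob k pE x * (if g (f x) j i = b then 1 else 0))"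
proof -
  have "code_recon_marg pS Sa E k f g i b = (1 / real k) * (\<Sum>j<k. \<Sum>s\<in>seqs Sa k. seq_prob pS k s * (\<lambda>x. if g (f x) j i = b then 1 else 0) (enc_input E k s))"
    unfolding code_recon_marg_def by (intro arg_cong[where f="\<lambda>t. _ * t"] sum.cong refl) auto
  also have "\<dots> = (1 / real k) * (\<Sum>j<k. \<Sum>x\<in>seq_space k XS. iid_prob k pE x * (if g (f x) j i = b then 1 else 0))"
    by (subst sum_seqs_enc_input) simp
  finally show ?thesis .
qed

definition some_recon :: "'i \<Rightarrow> 'b" where "some_recon = (\<lambda>i. SOME b. b \<in> Rh i)"

lemma some_recon: "some_recon \<in> YS" unfolding some_recon_def using ne_R by (auto simp: some_in_eq)

lemma iid_prob_pos_has_preimage: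
  assumes x: "x \<in> seq_space k XS" and pos: "iid_prob k pE x > 0"
  shows "\<exists>s\<in>seqs Sa k. enc_input E k s = x"
proof -
  have "pE (x l) \<noteq> 0" if "l < k" for l
  proof
    assume "pE (x l) = 0"
    then have "iid_prob k pE x = 0" unfolding iid_prob_def using that by (intro prod_zero) auto
    with pos show False by simp
  qed
  then have "fiber (x l) \<noteq> {}" if "l < k" for l using that pE_eq_sum_fiber by force
  then have "Pi\<^sub>E {..<k} (\<lambda>l. fiber (x l)) \<noteq> {}" by (simp add: PiE_eq_empty_iff)
  then obtain s where "s \<in> {s \<in> seqs Sa k. enc_input E k s = x}" unfolding enc_input_preimage[OF x] by blast
  then show ?thesis by blast
qed

lemma code_valid_less:
  assumes cv: "code_valid Sa Rh E k N f g" and x: "x \<in> seq_space k XS" and pos: "iid_prob k pE x > 0"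
  shows "f x < N"
  using iid_prob_pos_has_preimage[OF x pos] cv by (auto simp: code_valid_def)

text \<open>Where \<open>pE x = 0\<close> the conditional law is irrelevant; a point mass keeps it a channel.\<close>

definition channel_of :: "(('i \<Rightarrow> 'a) \<Rightarrow> ('i \<Rightarrow> 'b) \<Rightarrow> real) \<Rightarrow> ('i \<Rightarrow> 'a) \<Rightarrow> ('i \<Rightarrow> 'b) \<Rightarrow> real" where
  "channel_of J x t = (if pE x = 0 then (if t = some_recon then 1 else 0) else J x t / pE x)"

context
  fixes J :: "('i \<Rightarrow> 'a) \<Rightarrow> ('i \<Rightarrow> 'b) \<Rightarrow> real"
  assumes J_nonneg: "\<And>x t. 0 \<le> J x t" and J_outside: "\<And>x t. t \<notin> YS \<Longrightarrow> J x t = 0"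
    and J_row: "\<And>x. x \<in> XS \<Longrightarrow> sum (J x) YS = pE x"
begin

lemma test_channel_channel_of: "test_channel Sa Rh E (channel_of J)"
  unfolding test_channel_def prob_simplex_def
proof (intro ballI CollectI conjI allI impI)
  fix x assume x: "x \<in> XS"
  show "0 \<le> channel_of J x t" for t using J_nonneg pE_nonneg by (simp add: channel_of_def)
  show "channel_of J x t = 0" if "t \<notin> YS" for t
    using that some_recon J_outside by (auto simp: channel_of_def)
  show "sum (channel_of J x) YS = 1"
  proof (cases "pE x = 0")
    case True then show ?thesis using some_recon finite_YS by (simp add: channel_of_def)
  next
    case False then show ?thesis using J_row[OF x] by (simp add: channel_of_def sum_divide_distrib[symmetric])
  qed
qed

lemma pE_mult_channel_of:
  assumes x: "x \<in> XS"
  shows "pE x * channel_of J x t = J x t"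
proof (cases "pE x = 0")
  case True
  have "J x t = 0"
  proof (cases "t \<in> YS")
    case True
    then show ?thesis using J_row[OF x] \<open>pE x = 0\<close> J_nonneg finite_YS by (simp add: sum_nonneg_eq_0_iff)
  qed (rule J_outside)
  then show ?thesis using True by simp
qed (simp add: channel_of_def)

end

lemma code_induces_test_channel:
  assumes cv: "code_valid Sa Rh E k N f g" and kpos: "k > 0"
  shows "\<exists>Q. test_channel Sa Rh E Q
     \<and> (\<forall>i. exp_eff_dist Q i = code_dist pS Sa E d k f g i)
     \<and> (\<forall>i b. out_marg Q i b = code_recon_marg pS Sa E k f g i b)
     \<and> info_SE_hat pS Sa Rh E Q \<le> log 2 (real N) / real k"
proof -
  \<comment> \<open>\<open>code_valid\<close> bounds \<open>f\<close> only on inputs that occur; clipping it changes nothing of positive probability.\<close>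
  define F' where "F' x = (if f x < N then f x else 0)" for x
  have "1 \<le> N" using cv by (simp add: code_valid_def)
  then interpret C: block_code XS YS pE k N F' g
    using finite_XS finite_YS pE_nonneg sum_pE kpos cv by unfold_locales (auto simp: F'_def code_valid_def)
  define Q where "Q = channel_of C.avg_joint"
  note J = C.avg_joint_nonneg C.avg_joint_outside C.avg_joint_row
  have tc: "test_channel Sa Rh E Q"
    unfolding Q_def by (rule test_channel_channel_of[where J=C.avg_joint, OF J])
  have pQ: "pE x * Q x t = C.avg_joint x t" if "x \<in> XS" for x t
    unfolding Q_def by (rule pE_mult_channel_of[where J=C.avg_joint, OF J that])
  have F'f: "iid_prob k pE x * \<Phi> (F' x) = iid_prob k pE x * \<Phi> (f x)" if "x \<in> seq_space k XS" for x \<Phi>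
    using code_valid_less[OF cv that] C.iid_prob_Xk_nonneg[OF that] by (cases "iid_prob k pE x > 0") (auto simp: F'_def)
  have avg: "(\<Sum>x\<in>XS. \<Sum>t\<in>YS. pE x * Q x t * L x t)
      = (1 / real k) * (\<Sum>j<k. \<Sum>x\<in>seq_space k XS. iid_prob k pE x * L (x j) (g (f x) j))" for L
  proof -
    have "(\<Sum>x\<in>XS. \<Sum>t\<in>YS. pE x * Q x t * L x t) = (\<Sum>x\<in>XS. \<Sum>t\<in>YS. C.avg_joint x t * L x t)"
      by (simp add: pQ)
    also have "\<dots> = (1 / real k) * (\<Sum>j<k. \<Sum>x\<in>seq_space k XS. iid_prob k pE x * L (x j) (g (F' x) j))"
      by (rule C.sum_avg_joint_weighted)
    finally show ?thesis
      using F'f[where \<Phi>="\<lambda>m. L (x j) (g m j)" for x j] by (simp cong: sum.cong)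
  qed
  have "exp_eff_dist Q i = code_dist pS Sa E d k f g i" for i
    unfolding exp_eff_dist_def code_dist_eq_avg[OF kpos] avg[of "\<lambda>x t. eff_dist i x (t i)"] by simp
  moreover have "out_marg Q i b = code_recon_marg pS Sa E k f g i b" for i b
  proof -
    have "out_marg Q i b = (\<Sum>x\<in>XS. \<Sum>t\<in>YS. pE x * Q x t * (if t i = b then 1 else 0))"
      unfolding out_marg_def by (intro sum.cong refl) auto
    then show ?thesis unfolding code_recon_marg_eq_avg avg by simp
  qed
  moreover have "info_SE_hat pS Sa Rh E Q = mutual_info XS YS C.avg_joint"
    unfolding info_SE_hat_def mutual_info_def by (intro sum.cong refl) (simp add: pQ sum.cong[OF refl pQ])
  ultimately show ?thesis using tc C.mutual_info_avg_joint_le_rate by auto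
qed
end

section \<open>Limits of test channels\<close>

lemma tendsto_fun_componentwise:
  fixes u :: "'n \<Rightarrow> 'b \<Rightarrow> real"
  assumes "\<And>b. ((\<lambda>n. u n b) \<longlongrightarrow> a b) F"
  shows "(u \<longlongrightarrow> a) F"
proof -
  have "limitin (product_topology (\<lambda>i. euclidean) UNIV) u a F"
    by (simp add: limitin_componentwise assms)
  then show ?thesis by (simp add: euclidean_product_topology)
qed

lemma bounded_family_convergent_subseq:
  fixes u :: "nat \<Rightarrow> 'c \<Rightarrow> real"
  assumes "finite C" and "\<And>n c. c \<in> C \<Longrightarrow> \<bar>u n c\<bar> \<le> M"
  shows "\<exists>r. strict_mono r \<and> (\<forall>c\<in>C. convergent (\<lambda>n. u (r n) c))"
  using assms
proof (induction C rule: finite_induct)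
  case empty
  show ?case by (rule exI[of _ id]) (simp add: strict_mono_def)
next
  case (insert c C)
  then obtain r where r: "strict_mono r" "\<forall>c\<in>C. convergent (\<lambda>n. u (r n) c)" by auto
  have "bounded (range (\<lambda>n. u (r n) c))"
    using insert.prems by (intro boundedI[of _ M]) auto
  then obtain l r2 where r2: "strict_mono r2" "((\<lambda>n. u (r n) c) \<circ> r2) \<longlonglongrightarrow> l"
    using bounded_imp_convergent_subsequence by blast
  have "convergent (\<lambda>n. u (r (r2 n)) c')" if "c' \<in> C" for c'
    using convergent_subseq_convergent[OF r(2)[rule_format, OF that] r2(1)] by (simp add: o_def)
  moreover have "convergent (\<lambda>n. u (r (r2 n)) c)"
    using r2(2) by (auto simp: o_def convergent_def)
  ultimately show ?case using strict_mono_compose[OF r(1) r2(1)] by (auto simp: o_def)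
qed

lemma abs_x_ln_x_le:
  assumes "0 < x" "x \<le> 1"
  shows "\<bar>x * ln x\<bar> \<le> 2 * sqrt x"
proof -
  have sx: "sqrt x > 0" using assms by simp
  have "ln (1 / sqrt x) \<le> 1 / sqrt x - 1" using sx by (intro ln_le_minus_one) simp
  then have "- ln (sqrt x) \<le> 1 / sqrt x - 1" using sx by (simp add: ln_div)
  moreover have "ln (sqrt x) = ln x / 2" using assms by (simp add: ln_sqrt)
  ultimately have "- ln x \<le> 2 / sqrt x" by simp
  moreover have "ln x \<le> 0" using assms by simp
  ultimately have "\<bar>x * ln x\<bar> = x * (- ln x)" using assms by (simp add: abs_mult)
  also have "x * (- ln x) \<le> x * (2 / sqrt x)"
    using \<open>- ln x \<le> 2 / sqrt x\<close> assms by (intro mult_left_mono) auto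
  finally have "\<bar>x * ln x\<bar> \<le> x * (2 / sqrt x)" .
  also have "x * (2 / sqrt x) = 2 * sqrt x"
    using sx by (metis (no_types, lifting) real_div_sqrt assms(1) less_eq_real_def times_divide_eq_right mult.commute)
  finally show ?thesis .
qed

lemma abs_mi_term_le:
  assumes a: "0 < a" and ac: "a \<le> c" and c1: "c \<le> 1" and ar: "a \<le> r"
  shows "\<bar>mi_term a r c\<bar> \<le> (4 * sqrt a + a * \<bar>ln r\<bar>) / ln 2"
proof -
  have c: "0 < c" "0 < r" using a ac ar by auto
  have e1: "mi_term a r c * ln 2 = a * ln (a / (r * c))"
    using a by (simp add: mi_term_def log_def)
  have e2: "ln (a / (r * c)) = ln a - ln r - ln c"
    using a c by (simp add: ln_div ln_mult)
  have eq: "mi_term a r c * ln 2 = a * ln a - a * ln r - a * ln c"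
    unfolding e1 e2 by (simp add: algebra_simps)
  have la: "\<bar>a * ln a\<bar> \<le> 2 * sqrt a" using abs_x_ln_x_le a ac c1 by simp
  have "ln a \<le> ln c" using a ac by simp
  moreover have "ln c \<le> 0" using c c1 by simp
  ultimately have lac: "ln a \<le> ln c" "ln c \<le> 0" "ln a \<le> 0" by auto
  have "\<bar>a * ln c\<bar> = a * (- ln c)" using a lac by (simp add: abs_mult)
  also have "\<dots> \<le> a * (- ln a)" using a lac by (intro mult_left_mono) auto
  also have "\<dots> = \<bar>a * ln a\<bar>" using a lac by (simp add: abs_mult)
  finally have "\<bar>a * ln c\<bar> \<le> \<bar>a * ln a\<bar>" .
  moreover have "\<bar>a * ln a - a * ln r - a * ln c\<bar> \<le> \<bar>a * ln a - a * ln r\<bar> + \<bar>a * ln c\<bar>"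
    by (rule abs_triangle_ineq4)
  moreover have "\<bar>a * ln a - a * ln r\<bar> \<le> \<bar>a * ln a\<bar> + \<bar>a * ln r\<bar>"
    by (rule abs_triangle_ineq4)
  moreover have "\<bar>a * ln r\<bar> = a * \<bar>ln r\<bar>" using a by (simp add: abs_mult)
  ultimately have "\<bar>mi_term a r c * ln 2\<bar> \<le> 4 * sqrt a + a * \<bar>ln r\<bar>"
    unfolding eq using la by linarith
  then show ?thesis by (simp add: abs_mult pos_le_divide_eq)
qed

text \<open>At the boundary \<open>a0 = 0\<close>, continuity comes from the \<open>x ln x\<close> bound \<open>abs_mi_term_le\<close>.\<close>

lemma mi_term_tendsto:
  fixes a c :: "nat \<Rightarrow> real"
  assumes la: "a \<longlonglongrightarrow> a0" and lc: "c \<longlonglongrightarrow> c0"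
    and a0: "\<And>n. 0 \<le> a n" and ac: "\<And>n. a n \<le> c n" and c1: "\<And>n. c n \<le> 1" and ar: "\<And>n. a n \<le> r"
  shows "(\<lambda>n. mi_term (a n) r (c n)) \<longlonglongrightarrow> mi_term a0 r c0"
proof -
  have A0: "0 \<le> a0" using la a0 by (intro LIMSEQ_le_const) auto
  have AC: "a0 \<le> c0" using la lc ac by (intro LIMSEQ_le) auto
  have AR: "a0 \<le> r" using la ar by (intro LIMSEQ_le_const2) auto
  show ?thesis
  proof (cases "a0 = 0")
    case False
    then have ap: "a0 > 0" using A0 by simp
    have ev: "eventually (\<lambda>n. a n > 0) sequentially" using la ap by (rule order_tendstoD)
    have "(\<lambda>n. a n * log 2 (a n / (r * c n))) \<longlonglongrightarrow> a0 * log 2 (a0 / (r * c0))"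
      using ap AC AR by (intro tendsto_intros la lc) auto
    moreover have "eventually (\<lambda>n. a n * log 2 (a n / (r * c n)) = mi_term (a n) r (c n)) sequentially"
      using ev by eventually_elim (simp add: mi_term_def)
    ultimately show ?thesis using False by (simp add: mi_term_def tendsto_cong)
  next
    case True
    show ?thesis
    proof (cases "r = 0")
      case True
      then have "\<And>n. a n = 0" using a0 ar by (meson antisym)
      then show ?thesis using \<open>a0 = 0\<close> by (simp add: mi_term_def)
    next
      case False
      have "(\<lambda>n. mi_term (a n) r (c n)) \<longlonglongrightarrow> 0"
      proof (rule Lim_null_comparison)
        show "eventually (\<lambda>n. norm (mi_term (a n) r (c n)) \<le> (4 * sqrt (a n) + a n * \<bar>ln r\<bar>) / ln 2) sequentially"
        proof (rule always_eventually, rule allI)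
          fix n
          show "norm (mi_term (a n) r (c n)) \<le> (4 * sqrt (a n) + a n * \<bar>ln r\<bar>) / ln 2"
          proof (cases "a n = 0")
            case True then show ?thesis by (simp add: mi_term_def)
          next
            case False
            then show ?thesis using abs_mi_term_le[of "a n" "c n" r] a0[of n] ac[of n] c1[of n] ar[of n] by simp
          qed
        qed
        have "(\<lambda>n. (4 * sqrt (a n) + a n * \<bar>ln r\<bar>) / ln 2) \<longlonglongrightarrow> (4 * sqrt 0 + 0 * \<bar>ln r\<bar>) / ln 2"
          using True la by (intro tendsto_intros) auto
        then show "(\<lambda>n. (4 * sqrt (a n) + a n * \<bar>ln r\<bar>) / ln 2) \<longlonglongrightarrow> 0" by simp
      qed
      then show ?thesis using True by (simp add: mi_term_def)
    qed
  qed
qed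

context rdp_setting begin

lemma test_channel_bounds:
  assumes tc: "test_channel Sa Rh E Q" and x: "x \<in> XS"
  shows "0 \<le> Q x t" "Q x t \<le> 1" "sum (Q x) YS = 1" "t \<notin> YS \<Longrightarrow> Q x t = 0"
proof -
  have s: "Q x \<in> prob_simplex YS" using tc x by (simp add: test_channel_def)
  then show "0 \<le> Q x t" "sum (Q x) YS = 1" "t \<notin> YS \<Longrightarrow> Q x t = 0"
    by (auto simp: prob_simplex_def)
  show "Q x t \<le> 1"
  proof (cases "t \<in> YS")
    case True
    then have "Q x t \<le> sum (Q x) YS" using s finite_YS by (intro member_le_sum) (auto simp: prob_simplex_def)
    then show ?thesis using s by (simp add: prob_simplex_def)
  qed (use s in \<open>simp add: prob_simplex_def\<close>)
qed

definition out_pmf :: "(('i \<Rightarrow> 'a) \<Rightarrow> ('i \<Rightarrow> 'b) \<Rightarrow> real) \<Rightarrow> ('i \<Rightarrow> 'b) \<Rightarrow> real" where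
  "out_pmf Q t = (\<Sum>x'\<in>XS. pE x' * Q x' t)"

lemma info_SE_hat_eq_mi_terms:
  assumes tc: "test_channel Sa Rh E Q"
  shows "info_SE_hat pS Sa Rh E Q = (\<Sum>x\<in>XS. \<Sum>t\<in>YS. mi_term (pE x * Q x t) (pE x) (out_pmf Q t))"
proof -
  have "(\<Sum>t'\<in>YS. pE x * Q x t') = pE x" if "x \<in> XS" for x
    using test_channel_bounds(3)[OF tc that] by (simp add: sum_distrib_left[symmetric])
  then show ?thesis unfolding info_SE_hat_def mutual_info_def mi_term_def out_pmf_def
    by (intro sum.cong refl) simp
qed

lemma out_pmf_bounds:
  assumes tc: "test_channel Sa Rh E Q" and x: "x \<in> XS" and t: "t \<in> YS"
  shows "pE x * Q x t \<le> out_pmf Q t" "out_pmf Q t \<le> 1" "pE x * Q x t \<le> pE x"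
proof -
  have nn: "0 \<le> pE x' * Q x' t'" if "x' \<in> XS" for x' t'
    using pE_nonneg test_channel_bounds(1)[OF tc that] by simp
  show "pE x * Q x t \<le> out_pmf Q t" unfolding out_pmf_def using finite_XS x nn by (intro member_le_sum) auto
  have "out_pmf Q t \<le> (\<Sum>t'\<in>YS. out_pmf Q t')" using finite_YS t nn unfolding out_pmf_def
    by (intro member_le_sum) (auto intro!: sum_nonneg)
  also have "\<dots> = (\<Sum>x'\<in>XS. pE x' * (\<Sum>t'\<in>YS. Q x' t'))"
    unfolding out_pmf_def by (subst sum.swap) (simp add: sum_distrib_left)
  also have "\<dots> = 1" using test_channel_bounds(3)[OF tc] sum_pE by simp
  finally show "out_pmf Q t \<le> 1" .
  show "pE x * Q x t \<le> pE x" using test_channel_bounds(2)[OF tc x] pE_nonneg[of x] by (simp add: mult_left_le)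
qed

lemma out_marg_simplex:
  assumes tc: "test_channel Sa Rh E Q"
  shows "out_marg Q i \<in> prob_simplex (Rh i)"
  unfolding prob_simplex_def
proof (intro CollectI conjI allI impI)
  fix b
  show "0 \<le> out_marg Q i b" unfolding out_marg_def using test_channel_bounds(1)[OF tc] pE_nonneg by (auto intro!: sum_nonneg)
  show "out_marg Q i b = 0" if "b \<notin> Rh i"
    unfolding out_marg_def using that by (intro sum.neutral ballI) (auto simp: PiE_iff)
next
  have "sum (out_marg Q i) (Rh i) = (\<Sum>x\<in>XS. \<Sum>t\<in>YS. \<Sum>b\<in>Rh i. if t i = b then pE x * Q x t else 0)"
    unfolding out_marg_def by (subst sum.swap, rule sum.cong[OF refl], rule sum.swap)
  also have "\<dots> = (\<Sum>x\<in>XS. \<Sum>t\<in>YS. pE x * Q x t)"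
    using fin_R by (intro sum.cong refl) (auto simp: PiE_iff sum.delta)
  also have "\<dots> = 1" using test_channel_bounds(3)[OF tc] sum_pE by (simp add: sum_distrib_left[symmetric])
  finally show "sum (out_marg Q i) (Rh i) = 1" .
qed

lemma marg_i_simplex: "marg_i pS Sa i \<in> prob_simplex (Sa i)"
  unfolding prob_simplex_def
proof (intro CollectI conjI allI impI)
  fix a
  show "0 \<le> marg_i pS Sa i a" unfolding marg_i_def by (auto intro!: sum_nonneg simp: pS_nonneg)
  show "marg_i pS Sa i a = 0" if "a \<notin> Sa i"
    unfolding marg_i_def using that by (intro sum.neutral ballI) (auto simp: PiE_iff)
next
  have "sum (marg_i pS Sa i) (Sa i) = (\<Sum>s\<in>US. \<Sum>a\<in>Sa i. if s i = a then pS s else 0)"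
    unfolding marg_i_def by (rule sum.swap)
  also have "\<dots> = (\<Sum>s\<in>US. pS s)" using fin_S by (intro sum.cong refl) (auto simp: PiE_iff sum.delta)
  finally show "sum (marg_i pS Sa i) (Sa i) = 1" using sum_pS by simp
qed

lemma test_channel_convergent_subseq:
  fixes Qs :: "nat \<Rightarrow> ('i \<Rightarrow> 'a) \<Rightarrow> ('i \<Rightarrow> 'b) \<Rightarrow> real"
  assumes tc: "\<And>n. test_channel Sa Rh E (Qs n)"
  obtains r Q where "strict_mono r" "test_channel Sa Rh E Q"
    "\<And>x t. x \<in> XS \<Longrightarrow> (\<lambda>n. Qs (r n) x t) \<longlonglongrightarrow> Q x t"
proof -
  have "\<exists>r. strict_mono r \<and> (\<forall>c\<in>XS \<times> YS. convergent (\<lambda>n. (\<lambda>(x, t). Qs (r n) x t) c))"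
  proof (rule bounded_family_convergent_subseq[where C="XS \<times> YS" and u="\<lambda>n (x, t). Qs n x t" and M=1])
    show "finite (XS \<times> YS)" using finite_XS finite_YS by simp
    fix n c assume "c \<in> XS \<times> YS"
    then show "\<bar>(case c of (x, t) \<Rightarrow> Qs n x t)\<bar> \<le> 1"
      using test_channel_bounds(1,2)[OF tc] by auto
  qed
  then obtain r where r: "strict_mono r" "\<forall>c\<in>XS \<times> YS. convergent (\<lambda>n. (\<lambda>(x, t). Qs (r n) x t) c)"
    by blast
  define Q where "Q x t = (if x \<in> XS \<and> t \<in> YS then lim (\<lambda>n. Qs (r n) x t) else 0)" for x t
  have conv: "(\<lambda>n. Qs (r n) x t) \<longlonglongrightarrow> Q x t" if x: "x \<in> XS" for x t
  proof (cases "t \<in> YS")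
    case True
    then show ?thesis using r(2) x by (simp add: Q_def convergent_LIMSEQ_iff)
  qed (use test_channel_bounds(4)[OF tc x] in \<open>simp add: Q_def\<close>)
  have "test_channel Sa Rh E Q"
    unfolding test_channel_def prob_simplex_def
  proof (intro ballI CollectI conjI allI impI)
    fix x assume x: "x \<in> XS"
    show "0 \<le> Q x t" for t using conv[OF x, of t] test_channel_bounds(1)[OF tc x]
      by (intro LIMSEQ_le_const) auto
    show "Q x t = 0" if "t \<notin> YS" for t using that by (simp add: Q_def)
    have "(\<lambda>n. \<Sum>t\<in>YS. Qs (r n) x t) \<longlonglongrightarrow> (\<Sum>t\<in>YS. Q x t)"
      by (intro tendsto_sum conv[OF x])
    then show "sum (Q x) YS = 1" using test_channel_bounds(3)[OF tc x] by (simp add: LIMSEQ_const_iff)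
  qed
  then show ?thesis using that r(1) conv by blast
qed

context
  fixes Qs :: "nat \<Rightarrow> ('i \<Rightarrow> 'a) \<Rightarrow> ('i \<Rightarrow> 'b) \<Rightarrow> real" and Q
  assumes tc: "\<And>n. test_channel Sa Rh E (Qs n)" "test_channel Sa Rh E Q"
    and conv: "\<And>x t. x \<in> XS \<Longrightarrow> (\<lambda>n. Qs n x t) \<longlonglongrightarrow> Q x t"
begin

lemma exp_eff_dist_tendsto: "(\<lambda>n. exp_eff_dist (Qs n) i) \<longlonglongrightarrow> exp_eff_dist Q i"
  unfolding exp_eff_dist_def by (intro tendsto_sum tendsto_mult tendsto_const conv) auto

lemma out_marg_tendsto: "(\<lambda>n. out_marg (Qs n) i) \<longlonglongrightarrow> out_marg Q i"
  unfolding out_marg_def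
  by (intro tendsto_fun_componentwise tendsto_sum) (auto intro!: tendsto_mult tendsto_const conv)

lemma info_SE_hat_tendsto: "(\<lambda>n. info_SE_hat pS Sa Rh E (Qs n)) \<longlonglongrightarrow> info_SE_hat pS Sa Rh E Q"
  unfolding info_SE_hat_eq_mi_terms[OF tc(1)] info_SE_hat_eq_mi_terms[OF tc(2)]
proof (intro tendsto_sum)
  fix x t assume x: "x \<in> XS" and t: "t \<in> YS"
  show "(\<lambda>n. mi_term (pE x * Qs n x t) (pE x) (out_pmf (Qs n) t)) \<longlonglongrightarrow> mi_term (pE x * Q x t) (pE x) (out_pmf Q t)"
  proof (rule mi_term_tendsto)
    show "(\<lambda>n. pE x * Qs n x t) \<longlonglongrightarrow> pE x * Q x t" by (intro tendsto_intros conv[OF x])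
    show "(\<lambda>n. out_pmf (Qs n) t) \<longlonglongrightarrow> out_pmf Q t"
      unfolding out_pmf_def by (intro tendsto_sum tendsto_intros conv)
    fix n
    show "0 \<le> pE x * Qs n x t" using pE_nonneg test_channel_bounds(1)[OF tc(1) x] by simp
    show "pE x * Qs n x t \<le> out_pmf (Qs n) t" "out_pmf (Qs n) t \<le> 1" "pE x * Qs n x t \<le> pE x"
      using out_pmf_bounds[OF tc(1) x t] by auto
  qed
qed

end

end

locale rdp_problem = rdp_setting pS Sa Rh E d
  for pS :: "('i::finite \<Rightarrow> 'a) \<Rightarrow> real" and Sa Rh E d +
  fixes \<phi> :: "'i \<Rightarrow> ('a \<Rightarrow> real) \<Rightarrow> ('b \<Rightarrow> real) \<Rightarrow> real"
  assumes phi_cc: "\<And>i p. p \<in> prob_simplex (Sa i) \<Longrightarrow> convex_cont_on_simplex (Rh i) (\<phi> i p)"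
begin

lemma phi_continuous: "continuous_on (prob_simplex (Rh i)) (\<phi> i (marg_i pS Sa i))"
  using phi_cc[OF marg_i_simplex] by (simp add: convex_cont_on_simplex_def)

definition feasible :: "('i \<Rightarrow> real) \<Rightarrow> ('i \<Rightarrow> real) \<Rightarrow> (('i \<Rightarrow> 'a) \<Rightarrow> ('i \<Rightarrow> 'b) \<Rightarrow> real) \<Rightarrow> bool" where
  "feasible D P Q \<longleftrightarrow> test_channel Sa Rh E Q
          \<and> (\<forall>i\<in>E. exp_dist pS Sa Rh E Q d i \<le> D i)
          \<and> (\<forall>i\<in>- E. exp_hat_dist pS Sa Rh E Q d i \<le> D i)
          \<and> (\<forall>i. \<phi> i (marg_i pS Sa i) (recon_marg pS Sa Rh E Q i) \<le> P i)"

lemma feasible_iff: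
  "feasible D P Q \<longleftrightarrow> test_channel Sa Rh E Q \<and> (\<forall>i. exp_eff_dist Q i \<le> D i)
     \<and> (\<forall>i. \<phi> i (marg_i pS Sa i) (out_marg Q i) \<le> P i)"
proof -
  have rm: "recon_marg pS Sa Rh E Q i = out_marg Q i" for i
    using recon_marg_eq_out_marg by (simp add: fun_eq_iff)
  have "(\<forall>i\<in>E. exp_dist pS Sa Rh E Q d i \<le> D i) \<and> (\<forall>i\<in>- E. exp_hat_dist pS Sa Rh E Q d i \<le> D i)
      \<longleftrightarrow> (\<forall>i. exp_eff_dist Q i \<le> D i)"
    using exp_dist_eq_exp_eff_dist exp_hat_dist_eq_exp_eff_dist by auto
  then show ?thesis unfolding feasible_def rm by (simp only: conj_assoc[symmetric])
qed

lemma achievable_imp_near_feasible: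
  assumes ach: "achievable pS Sa Rh E d \<phi> R D P" and e: "e > 0"
  shows "\<exists>Q. test_channel Sa Rh E Q \<and> (\<forall>i. exp_eff_dist Q i \<le> D i + e)
    \<and> (\<forall>i. \<phi> i (marg_i pS Sa i) (out_marg Q i) \<le> P i + e) \<and> info_SE_hat pS Sa Rh E Q \<le> R + e"
proof -
  obtain K where K: "\<forall>k\<ge>K. \<exists>N f g. code_valid Sa Rh E k N f g
      \<and> log 2 (real N) / real k \<le> R + e
      \<and> (\<forall>i. code_dist pS Sa E d k f g i \<le> D i + e)
      \<and> (\<forall>i. \<phi> i (marg_i pS Sa i) (code_recon_marg pS Sa E k f g i) \<le> P i + e)"
    using ach e unfolding achievable_def by blast
  define k where "k = max K 1"
  obtain N f g where c: "code_valid Sa Rh E k N f g" "log 2 (real N) / real k \<le> R + e"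
    "\<forall>i. code_dist pS Sa E d k f g i \<le> D i + e"
    "\<forall>i. \<phi> i (marg_i pS Sa i) (code_recon_marg pS Sa E k f g i) \<le> P i + e"
    using K[rule_format, of k] by (auto simp: k_def)
  have kpos: "k > 0" by (simp add: k_def)
  obtain Q where Q: "test_channel Sa Rh E Q" "\<forall>i. exp_eff_dist Q i = code_dist pS Sa E d k f g i"
    "\<forall>i b. out_marg Q i b = code_recon_marg pS Sa E k f g i b"
    "info_SE_hat pS Sa Rh E Q \<le> log 2 (real N) / real k"
    using code_induces_test_channel[OF c(1) kpos] by blast
  have "out_marg Q i = code_recon_marg pS Sa E k f g i" for i using Q(3) by (simp add: fun_eq_iff)
  then show ?thesis using Q c by (intro exI[of _ Q]) auto
qed

theorem achievable_imp_feasible: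
  assumes ach: "achievable pS Sa Rh E d \<phi> R D P"
  obtains Q where "feasible D P Q" "info_SE_hat pS Sa Rh E Q \<le> R"
proof -
  define e where "e n = inverse (real (Suc n))" for n :: nat
  have "\<exists>Q. test_channel Sa Rh E Q \<and> (\<forall>i. exp_eff_dist Q i \<le> D i + e n)
      \<and> (\<forall>i. \<phi> i (marg_i pS Sa i) (out_marg Q i) \<le> P i + e n) \<and> info_SE_hat pS Sa Rh E Q \<le> R + e n" for n
    using achievable_imp_near_feasible[OF ach] by (simp add: e_def)
  then obtain Qs where Qs: "\<And>n. test_channel Sa Rh E (Qs n)" "\<And>n i. exp_eff_dist (Qs n) i \<le> D i + e n"
    "\<And>n i. \<phi> i (marg_i pS Sa i) (out_marg (Qs n) i) \<le> P i + e n"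
    "\<And>n. info_SE_hat pS Sa Rh E (Qs n) \<le> R + e n"
    by metis
  obtain r Q where r: "strict_mono r" and tc: "test_channel Sa Rh E Q"
    and conv: "\<And>x t. x \<in> XS \<Longrightarrow> (\<lambda>n. Qs (r n) x t) \<longlonglongrightarrow> Q x t"
    using test_channel_convergent_subseq[where Qs=Qs, OF Qs(1)] by blast
  have tc_r: "\<And>n. test_channel Sa Rh E (Qs (r n))" using Qs(1) .
  have "(\<lambda>n. e (r n)) \<longlonglongrightarrow> 0"
    using LIMSEQ_subseq_LIMSEQ[OF LIMSEQ_inverse_real_of_nat r] by (simp add: e_def o_def)
  from tendsto_add[OF tendsto_const this] have slack: "(\<lambda>n. c + e (r n)) \<longlonglongrightarrow> c" for c
    by simp
  have "exp_eff_dist Q i \<le> D i" for i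
    by (rule LIMSEQ_le[OF exp_eff_dist_tendsto[OF tc_r tc conv] slack]) (use Qs(2) in auto)
  moreover have "\<phi> i (marg_i pS Sa i) (out_marg Q i) \<le> P i" for i
  proof -
    have "(\<lambda>n. \<phi> i (marg_i pS Sa i) (out_marg (Qs (r n)) i)) \<longlonglongrightarrow> \<phi> i (marg_i pS Sa i) (out_marg Q i)"
      using out_marg_tendsto[OF tc_r tc conv]
      by (rule continuous_on_tendsto_compose[OF phi_continuous]) (auto simp: out_marg_simplex tc Qs(1))
    from LIMSEQ_le[OF this slack] show ?thesis using Qs(3) by auto
  qed
  moreover have "info_SE_hat pS Sa Rh E Q \<le> R"
    by (rule LIMSEQ_le[OF info_SE_hat_tendsto[OF tc_r tc conv] slack]) (use Qs(4) in auto)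
  ultimately show ?thesis using that tc by (auto simp: feasible_iff)
qed

end

section \<open>Covering by jointly typical codewords\<close>

lemma exists_heavy_codeword:
  fixes w :: "'x \<Rightarrow> real" and qq :: "'y \<Rightarrow> real"
  assumes finYc: "finite Yc" and qq0: "\<And>y. y \<in> Yc \<Longrightarrow> 0 \<le> qq y" and qq1: "sum qq Yc = 1"
    and w0: "\<And>x. 0 \<le> w x" and cov: "\<And>x. x \<in> U \<Longrightarrow> \<gamma> \<le> (\<Sum>y\<in>Yc. if R x y then qq y else 0)"
  obtains y where "y \<in> Yc" "\<gamma> * sum w U \<le> (\<Sum>x\<in>U. if R x y then w x else 0)"
proof -
  define val where "val y = (\<Sum>x\<in>U. if R x y then w x else 0)" for y
  have "Yc \<noteq> {}" using qq1 by auto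
  then have "Max (val ` Yc) \<in> val ` Yc" using finYc by (intro Max_in) auto
  then obtain y where y: "y \<in> Yc" "val y = Max (val ` Yc)" by auto
  have max: "val y' \<le> val y" if "y' \<in> Yc" for y' using finYc that y(2) by (simp add: Max_ge)
  have "\<gamma> * sum w U = (\<Sum>x\<in>U. \<gamma> * w x)" by (rule sum_distrib_left)
  also have "\<dots> \<le> (\<Sum>x\<in>U. w x * (\<Sum>y\<in>Yc. if R x y then qq y else 0))"
  proof (rule sum_mono)
    fix x assume "x \<in> U"
    show "\<gamma> * w x \<le> w x * (\<Sum>y\<in>Yc. if R x y then qq y else 0)"
      using mult_right_mono[OF cov[OF \<open>x \<in> U\<close>] w0[of x]] by (simp add: mult.commute)
  qed
  also have "\<dots> = (\<Sum>y\<in>Yc. qq y * val y)"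
    unfolding val_def sum_distrib_left
    by (subst sum.swap) (intro sum.cong refl, auto simp: sum_distrib_left intro!: sum.cong)
  also have "\<dots> \<le> (\<Sum>y'\<in>Yc. qq y' * val y)" by (intro sum_mono mult_left_mono max qq0)
  also have "\<dots> = val y" using qq1 by (simp add: sum_distrib_right[symmetric])
  finally show ?thesis using that y(1) by (simp add: val_def)
qed

text \<open>Derandomised random coding: codewords are chosen one at a time, each hitting the most
  remaining mass (\<open>exists_heavy_codeword\<close>).\<close>

lemma greedy_cover:
  fixes pp :: "'x \<Rightarrow> real" and qq :: "'y \<Rightarrow> real"
  assumes finYc: "finite Yc" and qq0: "\<And>y. y \<in> Yc \<Longrightarrow> 0 \<le> qq y" and qq1: "sum qq Yc = 1"
    and pp0: "\<And>x. 0 \<le> pp x" and \<gamma>1: "\<gamma> \<le> 1"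
    and cov: "\<And>x. x \<in> U \<Longrightarrow> \<gamma> \<le> (\<Sum>y\<in>Yc. if R x y then qq y else 0)"
  shows "\<exists>c. (\<forall>m<n. c m \<in> Yc) \<and> (\<Sum>x\<in>U. if \<forall>m<n. \<not> R x (c m) then pp x else 0) \<le> (1 - \<gamma>)^n * sum pp U"
proof (induction n)
  case 0
  show ?case by (rule exI[of _ "\<lambda>_. undefined"]) simp
next
  case (Suc n)
  then obtain c where c: "\<forall>m<n. c m \<in> Yc" and
    M: "(\<Sum>x\<in>U. if \<forall>m<n. \<not> R x (c m) then pp x else 0) \<le> (1 - \<gamma>)^n * sum pp U" by blast
  define w where "w x = (if \<forall>m<n. \<not> R x (c m) then pp x else 0)" for x
  have w0: "\<And>x. 0 \<le> w x" using pp0 by (simp add: w_def)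
  obtain y where y: "y \<in> Yc" "\<gamma> * sum w U \<le> (\<Sum>x\<in>U. if R x y then w x else 0)"
    by (rule exists_heavy_codeword[OF finYc qq0 qq1 w0 cov])
  have c': "\<forall>m<Suc n. (c(n := y)) m \<in> Yc" using c y(1) by (auto simp: less_Suc_eq)
  have "(\<Sum>x\<in>U. if \<forall>m<Suc n. \<not> R x ((c(n := y)) m) then pp x else 0)
      = sum w U - (\<Sum>x\<in>U. if R x y then w x else 0)"
    unfolding w_def by (simp add: sum_subtractf[symmetric] less_Suc_eq) (intro sum.cong refl, auto)
  also have "\<dots> \<le> (1 - \<gamma>) * sum w U" using y(2) by (simp add: algebra_simps)
  also have "\<dots> \<le> (1 - \<gamma>)^(Suc n) * sum pp U"
    using mult_left_mono[OF M, of "1 - \<gamma>"] \<gamma>1 by (simp add: w_def)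
  finally show ?case using c' by blast
qed

locale source_channel =
  fixes X :: "'x set" and Y :: "'y set" and p :: "'x \<Rightarrow> real" and Q :: "'x \<Rightarrow> 'y \<Rightarrow> real"
  assumes finite_X: "finite X" and finite_Y: "finite Y" and p_nonneg: "\<And>a. 0 \<le> p a" and sum_p: "sum p X = 1"
    and Q_nonneg: "\<And>a b. a \<in> X \<Longrightarrow> 0 \<le> Q a b" and sum_Q: "\<And>a. a \<in> X \<Longrightarrow> sum (Q a) Y = 1"
begin

definition joint :: "'x \<Rightarrow> 'y \<Rightarrow> real" where
  "joint a b = p a * Q a b"

definition out :: "'y \<Rightarrow> real" where
  "out b = (\<Sum>a\<in>X. joint a b)"

definition mean :: "('x \<Rightarrow> 'y \<Rightarrow> real) \<Rightarrow> real" where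
  "mean h = (\<Sum>a\<in>X. \<Sum>b\<in>Y. joint a b * h a b)"

definition var :: "('x \<Rightarrow> 'y \<Rightarrow> real) \<Rightarrow> real" where
  "var h = (\<Sum>a\<in>X. \<Sum>b\<in>Y. joint a b * (h a b - mean h)^2)"

definition joint_seq :: "nat \<Rightarrow> (nat \<Rightarrow> 'x) \<Rightarrow> (nat \<Rightarrow> 'y) \<Rightarrow> real" where
  "joint_seq k x y = (\<Prod>j<k. joint (x j) (y j))"

lemma joint_nonneg: "a \<in> X \<Longrightarrow> 0 \<le> joint a b" unfolding joint_def using p_nonneg Q_nonneg by simp

lemma sum_joint: "(\<Sum>a\<in>X. \<Sum>b\<in>Y. joint a b) = 1"
  unfolding joint_def using sum_p sum_Q by (simp add: sum_distrib_left[symmetric])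

lemma joint_seq_nonneg: "x \<in> seq_space k X \<Longrightarrow> 0 \<le> joint_seq k x y"
  unfolding joint_seq_def seq_space_def by (intro prod_nonneg) (auto simp: joint_nonneg PiE_iff)

lemma joint_seq_cross_moment:
  fixes g :: "'x \<Rightarrow> 'y \<Rightarrow> real"
  assumes g0: "mean g = 0" and j: "j < k" and l: "l < k"
  shows "(\<Sum>x\<in>seq_space k X. \<Sum>y\<in>seq_space k Y. joint_seq k x y * (g (x j) (y j) * g (x l) (y l)))
      = (if j = l then mean (\<lambda>a b. (g a b)^2) else 0)"
proof -
  define f where "f m a b = joint a b * (if m = j then g a b else 1) * (if m = l then g a b else 1)" for m a b
  have "(\<Sum>x\<in>seq_space k X. \<Sum>y\<in>seq_space k Y. joint_seq k x y * (g (x j) (y j) * g (x l) (y l)))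
      = (\<Sum>x\<in>seq_space k X. \<Sum>y\<in>seq_space k Y. \<Prod>m<k. f m (x m) (y m))"
  proof (intro sum.cong refl)
    fix x y
    have "(\<Prod>m<k. f m (x m) (y m)) = (\<Prod>m<k. joint (x m) (y m)) * (\<Prod>m<k. (if m = j then g (x m) (y m) else 1)) * (\<Prod>m<k. (if m = l then g (x m) (y m) else 1))"
      unfolding f_def by (simp add: prod.distrib)
    also have "\<dots> = joint_seq k x y * (g (x j) (y j) * g (x l) (y l))"
      using j l by (simp add: joint_seq_def prod.If_cases Int_absorb1)
    finally show "joint_seq k x y * (g (x j) (y j) * g (x l) (y l)) = (\<Prod>m<k. f m (x m) (y m))" by simp
  qed
  also have "\<dots> = (\<Prod>m<k. \<Sum>a\<in>X. \<Sum>b\<in>Y. f m a b)" by (rule sum_sum_prod_seq_space[OF finite_X finite_Y])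
  also have "\<dots> = (if j = l then mean (\<lambda>a b. (g a b)^2) else 0)"
  proof (cases "j = l")
    case True
    have "(\<Prod>m<k. \<Sum>a\<in>X. \<Sum>b\<in>Y. f m a b) = (\<Sum>a\<in>X. \<Sum>b\<in>Y. f j a b) * (\<Prod>m\<in>{..<k}-{j}. \<Sum>a\<in>X. \<Sum>b\<in>Y. f m a b)"
      using j by (subst prod.remove[of _ j]) auto
    also have "(\<Prod>m\<in>{..<k}-{j}. \<Sum>a\<in>X. \<Sum>b\<in>Y. f m a b) = 1"
      using True sum_joint by (intro prod.neutral) (auto simp: f_def)
    also have "(\<Sum>a\<in>X. \<Sum>b\<in>Y. f j a b) = mean (\<lambda>a b. (g a b)^2)"
      using True by (simp add: f_def mean_def power2_eq_square mult.assoc)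
    finally show ?thesis using True by simp
  next
    case False
    have "(\<Prod>m<k. \<Sum>a\<in>X. \<Sum>b\<in>Y. f m a b) = (\<Sum>a\<in>X. \<Sum>b\<in>Y. f j a b) * (\<Prod>m\<in>{..<k}-{j}. \<Sum>a\<in>X. \<Sum>b\<in>Y. f m a b)"
      using j by (subst prod.remove[of _ j]) auto
    also have "(\<Sum>a\<in>X. \<Sum>b\<in>Y. f j a b) = mean g"
      using False by (simp add: f_def mean_def)
    finally show ?thesis using False g0 by simp
  qed
  finally show ?thesis .
qed

lemma second_moment_letter_sum:
  fixes g :: "'x \<Rightarrow> 'y \<Rightarrow> real"
  assumes g0: "mean g = 0"
  shows "(\<Sum>x\<in>seq_space k X. \<Sum>y\<in>seq_space k Y. joint_seq k x y * (\<Sum>j<k. g (x j) (y j))^2) = real k * mean (\<lambda>a b. (g a b)^2)"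
proof -
  have "(\<Sum>x\<in>seq_space k X. \<Sum>y\<in>seq_space k Y. joint_seq k x y * (\<Sum>j<k. g (x j) (y j))^2)
      = (\<Sum>x\<in>seq_space k X. \<Sum>y\<in>seq_space k Y. \<Sum>j<k. \<Sum>l<k. joint_seq k x y * (g (x j) (y j) * g (x l) (y l)))"
  proof (intro sum.cong refl)
    fix x y
    have "(\<Sum>j<k. g (x j) (y j))^2 = (\<Sum>j<k. \<Sum>l<k. g (x j) (y j) * g (x l) (y l))"
      by (simp add: power2_eq_square sum_product)
    then show "joint_seq k x y * (\<Sum>j<k. g (x j) (y j))^2 = (\<Sum>j<k. \<Sum>l<k. joint_seq k x y * (g (x j) (y j) * g (x l) (y l)))"
      by (simp add: sum_distrib_left)
  qed
  also have "\<dots> = (\<Sum>j<k. \<Sum>l<k. \<Sum>x\<in>seq_space k X. \<Sum>y\<in>seq_space k Y. joint_seq k x y * (g (x j) (y j) * g (x l) (y l)))"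
  proof -
    have "(\<Sum>x\<in>seq_space k X. \<Sum>y\<in>seq_space k Y. \<Sum>j<k. \<Sum>l<k. joint_seq k x y * (g (x j) (y j) * g (x l) (y l)))
        = (\<Sum>x\<in>seq_space k X. \<Sum>j<k. \<Sum>y\<in>seq_space k Y. \<Sum>l<k. joint_seq k x y * (g (x j) (y j) * g (x l) (y l)))"
      by (intro sum.cong refl sum.swap)
    also have "\<dots> = (\<Sum>j<k. \<Sum>x\<in>seq_space k X. \<Sum>y\<in>seq_space k Y. \<Sum>l<k. joint_seq k x y * (g (x j) (y j) * g (x l) (y l)))"
      by (rule sum.swap)
    also have "\<dots> = (\<Sum>j<k. \<Sum>x\<in>seq_space k X. \<Sum>l<k. \<Sum>y\<in>seq_space k Y. joint_seq k x y * (g (x j) (y j) * g (x l) (y l)))"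
      by (intro sum.cong refl sum.swap)
    also have "\<dots> = (\<Sum>j<k. \<Sum>l<k. \<Sum>x\<in>seq_space k X. \<Sum>y\<in>seq_space k Y. joint_seq k x y * (g (x j) (y j) * g (x l) (y l)))"
      by (intro sum.cong refl sum.swap)
    finally show ?thesis .
  qed
  also have "\<dots> = (\<Sum>j<k. \<Sum>l<k. if j = l then mean (\<lambda>a b. (g a b)^2) else 0)"
    by (intro sum.cong refl joint_seq_cross_moment[OF g0]) auto
  also have "\<dots> = real k * mean (\<lambda>a b. (g a b)^2)" by simp
  finally show ?thesis .
qed

lemma mean_shift: "mean (\<lambda>a b. h a b - c) = mean h - c"
  unfolding mean_def using sum_joint
  by (simp add: right_diff_distrib sum_subtractf sum_distrib_right[symmetric])

lemma chebyshev_letter_sum: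
  assumes k: "k > 0" and \<delta>: "\<delta> > 0"
  shows "(\<Sum>x\<in>seq_space k X. \<Sum>y\<in>seq_space k Y. joint_seq k x y * (if (\<Sum>j<k. h (x j) (y j)) > real k * (mean h + \<delta>) then 1 else 0))
     \<le> var h / (real k * \<delta>^2)"
proof -
  define g where "g a b = h a b - mean h" for a b
  have g0: "mean g = 0" unfolding g_def using mean_shift[of h "mean h"] by simp
  have var_eq: "var h = mean (\<lambda>a b. (g a b)^2)" unfolding var_def mean_def g_def by simp
  have pt: "(if (\<Sum>j<k. h (x j) (y j)) > real k * (mean h + \<delta>) then 1 else 0) \<le> (\<Sum>j<k. g (x j) (y j))^2 / (real k * \<delta>)^2"
    for x y
  proof -
    have S: "(\<Sum>j<k. g (x j) (y j)) = (\<Sum>j<k. h (x j) (y j)) - real k * mean h"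
      unfolding g_def by (simp add: sum_subtractf)
    show ?thesis
    proof (cases "(\<Sum>j<k. h (x j) (y j)) > real k * (mean h + \<delta>)")
      case True
      then have "(\<Sum>j<k. g (x j) (y j)) > real k * \<delta>" unfolding S by (simp add: algebra_simps)
      moreover have "real k * \<delta> > 0" using k \<delta> by simp
      ultimately have "(real k * \<delta>)^2 \<le> (\<Sum>j<k. g (x j) (y j))^2"
        by (intro power_mono) auto
      then show ?thesis using True k \<delta> by simp
    qed simp
  qed
  have "(\<Sum>x\<in>seq_space k X. \<Sum>y\<in>seq_space k Y. joint_seq k x y * (if (\<Sum>j<k. h (x j) (y j)) > real k * (mean h + \<delta>) then 1 else 0))
     \<le> (\<Sum>x\<in>seq_space k X. \<Sum>y\<in>seq_space k Y. joint_seq k x y * ((\<Sum>j<k. g (x j) (y j))^2 / (real k * \<delta>)^2))"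
    by (intro sum_mono mult_left_mono pt joint_seq_nonneg) auto
  also have "\<dots> = (\<Sum>x\<in>seq_space k X. \<Sum>y\<in>seq_space k Y. joint_seq k x y * (\<Sum>j<k. g (x j) (y j))^2) / (real k * \<delta>)^2"
    by (simp add: sum_divide_distrib)
  also have "\<dots> = real k * var h / (real k * \<delta>)^2" unfolding second_moment_letter_sum[OF g0] var_eq ..
  also have "\<dots> = var h / (real k * \<delta>^2)" using k by (simp add: power2_eq_square)
  finally show ?thesis .
qed

definition info_density :: "'x \<Rightarrow> 'y \<Rightarrow> real" where
  "info_density a b = (if joint a b = 0 then 0 else log 2 (joint a b / (p a * out b)))"

definition info :: real where
  "info = mean info_density"

definition typical :: "nat \<Rightarrow> real \<Rightarrow> ('x \<Rightarrow> 'y \<Rightarrow> real) set \<Rightarrow> (nat \<Rightarrow> 'x) \<Rightarrow> (nat \<Rightarrow> 'y) \<Rightarrow> bool" where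
  "typical k \<delta> H x y \<longleftrightarrow> (\<forall>j<k. 0 < joint (x j) (y j))
     \<and> (\<forall>h\<in>H. (\<Sum>j<k. h (x j) (y j)) \<le> real k * (mean h + \<delta>))"

definition channel_seq :: "nat \<Rightarrow> (nat \<Rightarrow> 'x) \<Rightarrow> (nat \<Rightarrow> 'y) \<Rightarrow> real" where
  "channel_seq k x y = (\<Prod>j<k. Q (x j) (y j))"

definition prob_atypical :: "nat \<Rightarrow> real \<Rightarrow> ('x \<Rightarrow> 'y \<Rightarrow> real) set \<Rightarrow> real" where
  "prob_atypical k \<delta> H = (\<Sum>x\<in>seq_space k X. \<Sum>y\<in>seq_space k Y. if typical k \<delta> H x y then 0 else joint_seq k x y)"

lemma out_nonneg: "0 \<le> out b" unfolding out_def by (intro sum_nonneg joint_nonneg)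

lemma sum_out: "sum out Y = 1" unfolding out_def using sum_joint by (subst sum.swap) simp

lemma joint_le_out: "a \<in> X \<Longrightarrow> joint a b \<le> out b" unfolding out_def using finite_X joint_nonneg by (intro member_le_sum) auto

lemma prob_atypical_le:
  assumes finH: "finite H" and k: "k > 0" and \<delta>: "\<delta> > 0"
  shows "prob_atypical k \<delta> H \<le> (\<Sum>h\<in>H. var h / (real k * \<delta>^2))"
proof -
  have pt: "(if typical k \<delta> H x y then 0 else joint_seq k x y)
      \<le> (\<Sum>h\<in>H. joint_seq k x y * (if (\<Sum>j<k. h (x j) (y j)) > real k * (mean h + \<delta>) then 1 else 0))"
    if x: "x \<in> seq_space k X" for x y
  proof (cases "typical k \<delta> H x y")
    case True then show ?thesis using joint_seq_nonneg[OF x] by (auto intro!: sum_nonneg)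
  next
    case False
    show ?thesis
    proof (cases "\<forall>j<k. 0 < joint (x j) (y j)")
      case True
      then obtain h where h: "h \<in> H" "(\<Sum>j<k. h (x j) (y j)) > real k * (mean h + \<delta>)"
        using False unfolding typical_def by (auto simp: not_le)
      have "joint_seq k x y = joint_seq k x y * (if (\<Sum>j<k. h (x j) (y j)) > real k * (mean h + \<delta>) then 1 else 0)"
        using h by simp
      also have "\<dots> \<le> (\<Sum>h\<in>H. joint_seq k x y * (if (\<Sum>j<k. h (x j) (y j)) > real k * (mean h + \<delta>) then 1 else 0))"
        using finH h(1) joint_seq_nonneg[OF x] by (intro member_le_sum) auto
      finally show ?thesis using False by simp
    next
      case False
      then obtain j where "j < k" "joint (x j) (y j) \<le> 0" by (auto simp: not_less)
      moreover have "0 \<le> joint (x j) (y j)" using x \<open>j < k\<close> by (intro joint_nonneg) (auto simp: seq_space_def PiE_iff)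
      ultimately have "joint_seq k x y = 0" unfolding joint_seq_def by (intro prod_zero) auto
      then show ?thesis by (auto intro!: sum_nonneg)
    qed
  qed
  have "prob_atypical k \<delta> H \<le> (\<Sum>x\<in>seq_space k X. \<Sum>y\<in>seq_space k Y. \<Sum>h\<in>H. joint_seq k x y * (if (\<Sum>j<k. h (x j) (y j)) > real k * (mean h + \<delta>) then 1 else 0))"
    unfolding prob_atypical_def by (intro sum_mono pt)
  also have "\<dots> = (\<Sum>h\<in>H. \<Sum>x\<in>seq_space k X. \<Sum>y\<in>seq_space k Y. joint_seq k x y * (if (\<Sum>j<k. h (x j) (y j)) > real k * (mean h + \<delta>) then 1 else 0))"
    by (subst sum.swap, rule sum.cong[OF refl], rule sum.swap)
  also have "\<dots> \<le> (\<Sum>h\<in>H. var h / (real k * \<delta>^2))" by (intro sum_mono chebyshev_letter_sum k \<delta>)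
  finally show ?thesis .
qed

lemma info_nonneg: "0 \<le> info"
proof -
  have pos: "0 < p a * out b" if "a \<in> X" "0 < joint a b" for a b
  proof -
    have "0 < out b" using that joint_le_out[of a b] by linarith
    then show ?thesis using that p_nonneg[of a] Q_nonneg[of a b] by (auto simp: joint_def zero_less_mult_iff)
  qed
  have "kl_term (\<Sum>z\<in>X \<times> Y. joint (fst z) (snd z)) (\<Sum>z\<in>X \<times> Y. p (fst z) * out (snd z))
      \<le> (\<Sum>z\<in>X \<times> Y. kl_term (joint (fst z) (snd z)) (p (fst z) * out (snd z)))"
    using finite_X finite_Y joint_nonneg p_nonneg out_nonneg pos by (intro log_sum_inequality) auto
  moreover have "(\<Sum>z\<in>X \<times> Y. joint (fst z) (snd z)) = 1"
    using sum_joint by (simp add: sum.cartesian_product case_prod_beta)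
  moreover have "(\<Sum>z\<in>X \<times> Y. p (fst z) * out (snd z)) = (\<Sum>a\<in>X. \<Sum>b\<in>Y. p a * out b)"
    by (simp add: sum.cartesian_product case_prod_beta)
  moreover have "\<dots> = 1"
    using sum_p sum_out by (simp add: sum_distrib_left[symmetric] sum_distrib_right[symmetric])
  moreover have "info = (\<Sum>z\<in>X \<times> Y. kl_term (joint (fst z) (snd z)) (p (fst z) * out (snd z))) / ln 2"
  proof -
    have "joint a b * info_density a b = kl_term (joint a b) (p a * out b) / ln 2" for a b
      by (simp add: info_density_def kl_term_def log_def)
    then have "info = (\<Sum>a\<in>X. \<Sum>b\<in>Y. kl_term (joint a b) (p a * out b) / ln 2)"
      unfolding info_def mean_def by simp
    then show ?thesis by (simp add: sum.cartesian_product case_prod_beta sum_divide_distrib)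
  qed
  ultimately show ?thesis by (simp add: kl_term_def)
qed

lemma typical_channel_seq_le:
  assumes x: "x \<in> seq_space k X" and G: "typical k \<delta> H x y" and iH: "info_density \<in> H"
  shows "channel_seq k x y \<le> 2 powr (real k * (info + \<delta>)) * iid_prob k out y"
proof -
  have pos: "0 < joint (x j) (y j)" if "j < k" for j using G that by (simp add: typical_def)
  have xj: "x j \<in> X" if "j < k" for j using x that by (auto simp: seq_space_def PiE_iff)
  have eq: "Q (x j) (y j) = out (y j) * 2 powr (info_density (x j) (y j))" if j: "j < k" for j
  proof -
    have pp: "0 < p (x j)" "0 < Q (x j) (y j)"
      using pos[OF j] p_nonneg[of "x j"] Q_nonneg[OF xj[OF j], of "y j"] by (auto simp: joint_def zero_less_mult_iff)
    have qp: "0 < out (y j)" using joint_le_out[OF xj[OF j], of "y j"] pos[OF j] by linarith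
    have "info_density (x j) (y j) = log 2 (Q (x j) (y j) / out (y j))"
      using pos[OF j] pp by (simp add: info_density_def joint_def)
    then show ?thesis using pp qp by simp
  qed
  have "channel_seq k x y = (\<Prod>j<k. out (y j) * 2 powr (info_density (x j) (y j)))"
    unfolding channel_seq_def by (intro prod.cong refl) (simp add: eq)
  also have "\<dots> = iid_prob k out y * 2 powr (\<Sum>j<k. info_density (x j) (y j))"
    by (simp add: prod.distrib iid_prob_def powr_sum)
  also have "\<dots> \<le> iid_prob k out y * 2 powr (real k * (info + \<delta>))"
  proof (intro mult_left_mono powr_mono)
    show "(\<Sum>j<k. info_density (x j) (y j)) \<le> real k * (info + \<delta>)" using G iH by (simp add: typical_def info_def)
    show "0 \<le> iid_prob k out y" unfolding iid_prob_def by (intro prod_nonneg out_nonneg)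
  qed simp
  finally show ?thesis by (simp add: mult.commute)
qed

lemma sum_channel_seq: "x \<in> seq_space k X \<Longrightarrow> (\<Sum>y\<in>seq_space k Y. channel_seq k x y) = 1"
  unfolding channel_seq_def using sum_prod_seq_space[OF finite_Y, of "\<lambda>j b. Q (x j) b" k]
  by (simp add: sum_Q seq_space_def PiE_iff)

lemma iid_prob_mult_channel_seq: "iid_prob k p x * channel_seq k x y = joint_seq k x y"
  unfolding iid_prob_def channel_seq_def joint_seq_def joint_def by (simp add: prod.distrib)

definition cond_typical :: "nat \<Rightarrow> real \<Rightarrow> ('x \<Rightarrow> 'y \<Rightarrow> real) set \<Rightarrow> (nat \<Rightarrow> 'x) \<Rightarrow> real" where
  "cond_typical k \<delta> H x = (\<Sum>y\<in>seq_space k Y. if typical k \<delta> H x y then channel_seq k x y else 0)"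

lemma channel_seq_nonneg: "x \<in> seq_space k X \<Longrightarrow> 0 \<le> channel_seq k x y"
  unfolding channel_seq_def by (intro prod_nonneg) (auto simp: Q_nonneg seq_space_letter)

lemma cond_typical_le_1:
  assumes "x \<in> seq_space k X"
  shows "cond_typical k \<delta> H x \<le> 1"
proof -
  have "cond_typical k \<delta> H x \<le> (\<Sum>y\<in>seq_space k Y. channel_seq k x y)"
    unfolding cond_typical_def using channel_seq_nonneg[OF assms] by (intro sum_mono) auto
  then show ?thesis using sum_channel_seq[OF assms] by simp
qed

lemma sum_iid_prob_cond_atypical:
  "(\<Sum>x\<in>seq_space k X. iid_prob k p x * (1 - cond_typical k \<delta> H x)) = prob_atypical k \<delta> H"
  unfolding prob_atypical_def
proof (rule sum.cong[OF refl])
  fix x assume x: "x \<in> seq_space k X"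
  have "1 - cond_typical k \<delta> H x = (\<Sum>y\<in>seq_space k Y. channel_seq k x y) - cond_typical k \<delta> H x"
    using sum_channel_seq[OF x] by simp
  also have "\<dots> = (\<Sum>y\<in>seq_space k Y. if typical k \<delta> H x y then 0 else channel_seq k x y)"
    unfolding cond_typical_def by (simp add: sum_subtractf[symmetric]) (intro sum.cong refl, auto)
  finally show "iid_prob k p x * (1 - cond_typical k \<delta> H x)
      = (\<Sum>y\<in>seq_space k Y. if typical k \<delta> H x y then 0 else joint_seq k x y)"
    by (simp add: sum_distrib_left iid_prob_mult_channel_seq[symmetric] if_distrib cong: if_cong)
qed

lemma out_typical_ge_cond_typical:
  assumes x: "x \<in> seq_space k X" and iH: "info_density \<in> H"
  shows "2 powr (- (real k * (info + \<delta>))) * cond_typical k \<delta> H x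
       \<le> (\<Sum>y\<in>seq_space k Y. if typical k \<delta> H x y then iid_prob k out y else 0)"
  unfolding cond_typical_def sum_distrib_left
proof (rule sum_mono)
  fix y
  have "2 powr (- (real k * (info + \<delta>))) * channel_seq k x y \<le> iid_prob k out y" if "typical k \<delta> H x y"
  proof -
    have "2 powr (- (real k * (info + \<delta>))) * channel_seq k x y
        \<le> 2 powr (- (real k * (info + \<delta>))) * (2 powr (real k * (info + \<delta>)) * iid_prob k out y)"
      using typical_channel_seq_le[OF x that iH] by (intro mult_left_mono) auto
    also have "\<dots> = iid_prob k out y" by (simp add: mult.assoc[symmetric] powr_add[symmetric])
    finally show ?thesis .
  qed
  then show "2 powr (- (real k * (info + \<delta>))) * (if typical k \<delta> H x y then channel_seq k x y else 0)
      \<le> (if typical k \<delta> H x y then iid_prob k out y else 0)"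
    by simp
qed

lemma prob_cond_typical_lt_half:
  "(\<Sum>x\<in>seq_space k X - {x. 1/2 \<le> cond_typical k \<delta> H x}. iid_prob k p x) \<le> 2 * prob_atypical k \<delta> H"
proof -
  have pk0: "0 \<le> iid_prob k p x" for x unfolding iid_prob_def by (intro prod_nonneg p_nonneg)
  have "iid_prob k p x \<le> 2 * (iid_prob k p x * (1 - cond_typical k \<delta> H x))"
    if "cond_typical k \<delta> H x < 1/2" for x
  proof -
    have "iid_prob k p x * (2 * cond_typical k \<delta> H x) \<le> iid_prob k p x * 1"
      using that pk0[of x] by (intro mult_left_mono) auto
    then show ?thesis by (simp add: algebra_simps)
  qed
  then have "(\<Sum>x\<in>seq_space k X - {x. 1/2 \<le> cond_typical k \<delta> H x}. iid_prob k p x)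
      \<le> (\<Sum>x\<in>seq_space k X - {x. 1/2 \<le> cond_typical k \<delta> H x}. 2 * (iid_prob k p x * (1 - cond_typical k \<delta> H x)))"
    by (intro sum_mono) auto
  also have "\<dots> \<le> (\<Sum>x\<in>seq_space k X. 2 * (iid_prob k p x * (1 - cond_typical k \<delta> H x)))"
    using finite_seq_space[OF finite_X] cond_typical_le_1 pk0 by (intro sum_mono2) auto
  also have "\<dots> = 2 * prob_atypical k \<delta> H"
    unfolding sum_distrib_left[symmetric] by (rule arg_cong[OF sum_iid_prob_cond_atypical])
  finally show ?thesis .
qed

text \<open>Source blocks that are conditionally typical with probability at least \<open>1/2\<close> are covered
  greedily, each codeword drawn from the output law being typical with them with probability at least
  \<open>\<gamma>\<close>; the remaining blocks carry at most twice the atypical probability.\<close>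

theorem exists_codebook:
  assumes k: "k > 0" and \<delta>: "\<delta> > 0" and finH: "finite H" and iH: "info_density \<in> H"
  defines "\<gamma> \<equiv> 2 powr (- (real k * (info + \<delta>))) / 2"
  shows "\<exists>c. (\<forall>m<N. c m \<in> seq_space k Y) \<and>
     (\<Sum>x\<in>seq_space k X. if \<exists>m<N. typical k \<delta> H x (c m) then 0 else iid_prob k p x)
       \<le> 2 * prob_atypical k \<delta> H + (1 - \<gamma>)^N"
proof -
  define Xk where "Xk = seq_space k X"
  define U where "U = {x\<in>Xk. 1/2 \<le> cond_typical k \<delta> H x}"
  define miss where "miss c x = (if \<exists>m<N. typical k \<delta> H x (c m) then 0 else iid_prob k p x)" for c x
  have finXk: "finite Xk" unfolding Xk_def by (rule finite_seq_space[OF finite_X])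
  have U: "U \<subseteq> Xk" "finite U" using finXk by (auto simp: U_def)
  have pk0: "0 \<le> iid_prob k p x" for x unfolding iid_prob_def by (intro prod_nonneg p_nonneg)
  have "1 \<le> 2 powr (real k * (info + \<delta>))" using info_nonneg \<delta> by (intro ge_one_powr_ge_zero) auto
  then have "2 powr (- (real k * (info + \<delta>))) \<le> 1" by (simp add: powr_minus inverse_le_1_iff)
  then have \<gamma>: "0 \<le> \<gamma>" "\<gamma> \<le> 1" unfolding \<gamma>_def by auto
  have cover: "\<gamma> \<le> (\<Sum>y\<in>seq_space k Y. if typical k \<delta> H x y then iid_prob k out y else 0)" if x: "x \<in> U" for x
  proof -
    have "\<gamma> \<le> 2 powr (- (real k * (info + \<delta>))) * cond_typical k \<delta> H x"
      using mult_left_mono[of "1/2" "cond_typical k \<delta> H x" "2 powr (- (real k * (info + \<delta>)))"] x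
      unfolding \<gamma>_def U_def by simp
    also have "\<dots> \<le> (\<Sum>y\<in>seq_space k Y. if typical k \<delta> H x y then iid_prob k out y else 0)"
      using out_typical_ge_cond_typical iH x by (simp add: U_def Xk_def)
    finally show ?thesis .
  qed
  have "\<exists>c. (\<forall>m<N. c m \<in> seq_space k Y)
      \<and> (\<Sum>x\<in>U. if \<forall>m<N. \<not> typical k \<delta> H x (c m) then iid_prob k p x else 0) \<le> (1 - \<gamma>)^N * sum (iid_prob k p) U"
  proof (rule greedy_cover[OF finite_seq_space[OF finite_Y] _ sum_iid_prob[OF finite_Y sum_out] pk0 \<gamma>(2)])
    show "\<And>y. y \<in> seq_space k Y \<Longrightarrow> 0 \<le> iid_prob k out y" unfolding iid_prob_def by (intro prod_nonneg out_nonneg)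
  qed (rule cover)
  then obtain c where c: "\<forall>m<N. c m \<in> seq_space k Y"
    and cU: "(\<Sum>x\<in>U. if \<forall>m<N. \<not> typical k \<delta> H x (c m) then iid_prob k p x else 0) \<le> (1 - \<gamma>)^N * sum (iid_prob k p) U"
    by blast
  have "sum (miss c) U = (\<Sum>x\<in>U. if \<forall>m<N. \<not> typical k \<delta> H x (c m) then iid_prob k p x else 0)"
    unfolding miss_def by (intro sum.cong refl) auto
  also have "\<dots> \<le> (1 - \<gamma>)^N * 1"
  proof -
    have "sum (iid_prob k p) U \<le> sum (iid_prob k p) Xk" using U finXk pk0 by (intro sum_mono2) auto
    then have "(1 - \<gamma>)^N * sum (iid_prob k p) U \<le> (1 - \<gamma>)^N * 1"
      using sum_iid_prob[OF finite_X sum_p] \<gamma> by (intro mult_left_mono) (auto simp: Xk_def)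
    then show ?thesis using cU by linarith
  qed
  finally have missU: "sum (miss c) U \<le> (1 - \<gamma>)^N" by simp
  have "sum (miss c) (Xk - U) \<le> sum (iid_prob k p) (Xk - U)"
    using pk0 by (intro sum_mono) (simp add: miss_def)
  also have "\<dots> \<le> 2 * prob_atypical k \<delta> H"
  proof -
    have "Xk - U = seq_space k X - {x. 1/2 \<le> cond_typical k \<delta> H x}" by (auto simp: U_def Xk_def)
    then show ?thesis using prob_cond_typical_lt_half[of k \<delta> H] by simp
  qed
  finally have "sum (miss c) Xk \<le> 2 * prob_atypical k \<delta> H + (1 - \<gamma>)^N"
    using missU sum.subset_diff[OF U(1) finXk, of "miss c"] by linarith
  then show ?thesis using c unfolding miss_def Xk_def by blast
qed
end

section \<open>Achievability\<close>

lemma one_minus_power_le_inverse: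
  fixes \<gamma> :: real
  assumes "0 \<le> \<gamma>" "\<gamma> \<le> 1"
  shows "(1 - \<gamma>)^N \<le> 1 / (1 + real N * \<gamma>)"
proof -
  have b: "1 + real N * \<gamma> \<le> (1 + \<gamma>)^N" using Bernoulli_inequality[of \<gamma> N] assms by simp
  have "(1 - \<gamma>)^N * (1 + real N * \<gamma>) \<le> (1 - \<gamma>)^N * (1 + \<gamma>)^N"
    using b assms by (intro mult_left_mono) auto
  also have "\<dots> = (1 - \<gamma>^2)^N" by (simp add: power_mult_distrib[symmetric] algebra_simps power2_eq_square)
  also have "\<dots> \<le> 1" using assms by (intro power_le_one) (auto simp: power_le_one)
  finally show ?thesis using assms by (simp add: pos_le_divide_eq add_pos_nonneg)
qed

lemma two_powr_ge_linear: "1 + t * ln 2 \<le> 2 powr (t::real)"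
  using exp_ge_add_one_self[of "t * ln 2"] by (simp add: powr_def)

lemma codebook_size_bounds:
  fixes I \<delta> :: real and k :: nat
  assumes k: "k > 0" and \<delta>: "\<delta> > 0" and I: "0 \<le> I"
  defines "N \<equiv> nat \<lfloor>2 powr (real k * (I + 2 * \<delta>))\<rfloor>"
  defines "\<gamma> \<equiv> 2 powr (- (real k * (I + \<delta>))) / 2"
  shows "(1 - \<gamma>)^N \<le> 2 / (real k * \<delta> * ln 2)" and "1 \<le> N" and "0 \<le> \<gamma>" and "\<gamma> \<le> 1"
    and "log 2 (real N) \<le> real k * (I + 2 * \<delta>)"
proof -
  define A where "A = 2 powr (real k * (I + 2 * \<delta>))"
  define B where "B = 2 powr (real k * (I + \<delta>))"
  define C where "C = 2 powr (real k * \<delta>)"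
  have AB: "A = B * C" unfolding A_def B_def C_def by (simp add: powr_add[symmetric] algebra_simps)
  have B1: "1 \<le> B" unfolding B_def using k \<delta> I by (intro ge_one_powr_ge_zero) auto
  have A1: "1 \<le> A" unfolding A_def using k \<delta> I by (intro ge_one_powr_ge_zero) auto
  have C1: "1 + real k * \<delta> * ln 2 \<le> C" unfolding C_def using two_powr_ge_linear[of "real k * \<delta>"] by simp
  have g: "\<gamma> = 1 / (2 * B)" unfolding \<gamma>_def B_def powr_minus_divide by simp
  show g0: "0 \<le> \<gamma>" using B1 g by simp
  show g1: "\<gamma> \<le> 1" using B1 g by simp
  have NA: "real N \<ge> A - 1" unfolding N_def A_def[symmetric] using A1 by linarith
  have NA2: "real N \<le> A" unfolding N_def A_def[symmetric] using A1 by linarith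
  show "1 \<le> N" unfolding N_def A_def[symmetric] using A1 by linarith
  have "real N * \<gamma> \<ge> (A - 1) / (2 * B)" unfolding g using NA B1 by (simp add: divide_right_mono)
  also have "(A - 1) / (2 * B) = (C - 1 / B) / 2" unfolding AB using B1 by (simp add: field_simps)
  also have "\<dots> \<ge> (C - 1) / 2"
  proof -
    have "1 / B \<le> 1" using B1 by simp
    then show ?thesis by (intro divide_right_mono) auto
  qed
  finally have Ng0: "real N * \<gamma> \<ge> (C - 1) / 2" .
  have "real k * \<delta> * ln 2 / 2 \<le> (C - 1) / 2" using C1 by (intro divide_right_mono) auto
  then have Ng: "real N * \<gamma> \<ge> real k * \<delta> * ln 2 / 2" using Ng0 by linarith
  have pos: "real k * \<delta> * ln 2 > 0" using k \<delta> by simp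
  have "(1 - \<gamma>)^N \<le> 1 / (1 + real N * \<gamma>)" by (rule one_minus_power_le_inverse[OF g0 g1])
  also have "\<dots> \<le> 1 / (real k * \<delta> * ln 2 / 2)"
    using Ng pos by (intro divide_left_mono) auto
  also have "\<dots> = 2 / (real k * \<delta> * ln 2)" by simp
  finally show "(1 - \<gamma>)^N \<le> 2 / (real k * \<delta> * ln 2)" .
  show "log 2 (real N) \<le> real k * (I + 2 * \<delta>)"
  proof -
    have "real N > 0" using \<open>1 \<le> N\<close> by simp
    then have "log 2 (real N) \<le> log 2 A" using NA2 by simp
    also have "log 2 A = real k * (I + 2 * \<delta>)" unfolding A_def by simp
    finally show ?thesis .
  qed
qed

lemma continuous_on_support_nbhd:
  fixes F :: "('b \<Rightarrow> real) \<Rightarrow> real"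
  assumes cont: "continuous_on S F" and qS: "q \<in> S" and fin: "finite B"
    and supp: "\<And>r b. r \<in> S \<Longrightarrow> b \<notin> B \<Longrightarrow> r b = 0" and e: "\<epsilon> > 0"
  shows "\<exists>\<eta>>0. \<forall>r\<in>S. (\<forall>b\<in>B. \<bar>r b - q b\<bar> < \<eta>) \<longrightarrow> \<bar>F r - F q\<bar> < \<epsilon>"
proof (rule ccontr)
  assume "\<not> ?thesis"
  then have "\<forall>n. \<exists>r\<in>S. (\<forall>b\<in>B. \<bar>r b - q b\<bar> < inverse (real (Suc n))) \<and> \<not> \<bar>F r - F q\<bar> < \<epsilon>"
    by (metis inverse_positive_iff_positive of_nat_0_less_iff zero_less_Suc)
  then obtain rs where rs: "\<And>n. rs n \<in> S" "\<And>n b. b \<in> B \<Longrightarrow> \<bar>rs n b - q b\<bar> < inverse (real (Suc n))"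
    "\<And>n. \<not> \<bar>F (rs n) - F q\<bar> < \<epsilon>" by metis
  have "rs \<longlonglongrightarrow> q"
  proof (rule tendsto_fun_componentwise)
    fix b
    show "(\<lambda>n. rs n b) \<longlonglongrightarrow> q b"
    proof (cases "b \<in> B")
      case True
      have "(\<lambda>n. rs n b - q b) \<longlonglongrightarrow> 0"
        by (rule Lim_null_comparison[OF _ LIMSEQ_inverse_real_of_nat])
          (use rs(2)[OF True] in \<open>auto intro!: always_eventually less_imp_le\<close>)
      from tendsto_add[OF this tendsto_const[of "q b"]] show ?thesis by simp
    next
      case False
      then show ?thesis using supp[OF rs(1) False] supp[OF qS False] by simp
    qed
  qed
  then have "(\<lambda>n. F (rs n)) \<longlonglongrightarrow> F q"
    by (rule continuous_on_tendsto_compose[OF cont _ qS]) (simp add: rs(1))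
  then have "(\<lambda>n. F (rs n) - F q) \<longlonglongrightarrow> 0" by (simp add: LIM_zero)
  then have "eventually (\<lambda>n. dist (F (rs n) - F q) 0 < \<epsilon>) sequentially" by (rule tendstoD[OF _ e])
  then obtain n where "\<bar>F (rs n) - F q\<bar> < \<epsilon>" by (auto simp: eventually_sequentially dist_real_def)
  with rs(3) show False by blast
qed

lemma sum_weighted_le_bad_mass:
  fixes pw a :: "'x \<Rightarrow> real"
  assumes fin: "finite S" and pw0: "\<And>x. x \<in> S \<Longrightarrow> 0 \<le> pw x" and pw1: "sum pw S = 1"
    and ab: "\<And>x. x \<in> S \<Longrightarrow> a x \<le> B + (if ok x then 0 else M)"
  shows "(\<Sum>x\<in>S. pw x * a x) \<le> B + M * (\<Sum>x\<in>S. if ok x then 0 else pw x)"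
proof -
  have "(\<Sum>x\<in>S. pw x * a x) \<le> (\<Sum>x\<in>S. pw x * (B + (if ok x then 0 else M)))"
    by (intro sum_mono mult_left_mono ab pw0)
  also have "\<dots> = (\<Sum>x\<in>S. B * pw x + M * (if ok x then 0 else pw x))"
    by (intro sum.cong refl) (simp add: algebra_simps)
  also have "\<dots> = B * sum pw S + M * (\<Sum>x\<in>S. if ok x then 0 else pw x)"
    by (simp add: sum.distrib sum_distrib_left)
  finally show ?thesis using pw1 by simp
qed

lemma sum_avg_swap:
  "(1 / real k) * (\<Sum>j<k. \<Sum>x\<in>S. w x * G x j) = (\<Sum>x\<in>S. w x * ((1 / real k) * (\<Sum>j<k. G x j)))"
  by (simp add: sum_distrib_left sum.swap[of _ "{..<k}"] mult.left_commute)

context source_channel begin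

lemma exists_good_codebook:
  assumes k: "k > 0" and \<delta>: "\<delta> > 0" and finH: "finite H" and iH: "info_density \<in> H"
  obtains N c where "1 \<le> N" "log 2 (real N) \<le> real k * (info + 2 * \<delta>)" "\<forall>m<N. c m \<in> seq_space k Y"
    "(\<Sum>x\<in>seq_space k X. if \<exists>m<N. typical k \<delta> H x (c m) then 0 else iid_prob k p x)
       \<le> (2 * (\<Sum>h\<in>H. var h) / \<delta>^2 + 2 / (\<delta> * ln 2)) / real k"
proof -
  define N where "N = nat \<lfloor>2 powr (real k * (info + 2 * \<delta>))\<rfloor>"
  note size = codebook_size_bounds[OF k \<delta> info_nonneg, folded N_def]
  obtain c where c: "\<forall>m<N. c m \<in> seq_space k Y"
    and miss: "(\<Sum>x\<in>seq_space k X. if \<exists>m<N. typical k \<delta> H x (c m) then 0 else iid_prob k p x)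
      \<le> 2 * prob_atypical k \<delta> H + (1 - 2 powr (- (real k * (info + \<delta>))) / 2)^N"
    using exists_codebook[OF k \<delta> finH iH, of N] by blast
  have "prob_atypical k \<delta> H \<le> (\<Sum>h\<in>H. var h) / (real k * \<delta>^2)"
    using prob_atypical_le[OF finH k \<delta>] by (simp add: sum_divide_distrib)
  then have "(\<Sum>x\<in>seq_space k X. if \<exists>m<N. typical k \<delta> H x (c m) then 0 else iid_prob k p x)
      \<le> 2 * ((\<Sum>h\<in>H. var h) / (real k * \<delta>^2)) + 2 / (real k * \<delta> * ln 2)"
    using miss size(1) by linarith
  also have "\<dots> = (2 * (\<Sum>h\<in>H. var h) / \<delta>^2 + 2 / (\<delta> * ln 2)) / real k"
    using k \<delta> by (simp add: field_simps)
  finally show ?thesis using that size(2,5) c by blast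
qed

end

context rdp_setting begin

lemma exp_eff_dist_nonneg: "test_channel Sa Rh E Q \<Longrightarrow> 0 \<le> exp_eff_dist Q i"
  unfolding exp_eff_dist_def using pE_nonneg test_channel_bounds(1) eff_dist_nonneg
  by (auto intro!: sum_nonneg simp: PiE_iff)

lemma iid_prob_pE_nonneg: "0 \<le> iid_prob k pE x"
  unfolding iid_prob_def by (intro prod_nonneg) (simp add: pE_nonneg)

definition dist_bound :: real where
  "dist_bound = (\<Sum>i\<in>UNIV. \<Sum>x\<in>XS. \<Sum>t\<in>YS. eff_dist i x (t i))"

lemma eff_dist_le_dist_bound:
  assumes "x \<in> XS" "t \<in> YS"
  shows "eff_dist i x (t i) \<le> dist_bound"
proof -
  have nn: "0 \<le> eff_dist i' x' (t' i')" if "x' \<in> XS" "t' \<in> YS" for i' x' t'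
    using eff_dist_nonneg that by (auto simp: PiE_iff)
  have "eff_dist i x (t i) \<le> (\<Sum>t\<in>YS. eff_dist i x (t i))"
    using finite_YS assms nn by (intro member_le_sum) auto
  also have "\<dots> \<le> (\<Sum>x\<in>XS. \<Sum>t\<in>YS. eff_dist i x (t i))"
    using finite_XS assms nn by (intro member_le_sum[where f="\<lambda>x. \<Sum>t\<in>YS. eff_dist i x (t i)"]) (auto intro!: sum_nonneg)
  also have "\<dots> \<le> dist_bound" unfolding dist_bound_def using nn
    by (intro member_le_sum[where f="\<lambda>i. \<Sum>x\<in>XS. \<Sum>t\<in>YS. eff_dist i x (t i)"]) (auto intro!: sum_nonneg)
  finally show ?thesis .
qed

lemma dist_bound_nonneg: "0 \<le> dist_bound"
  unfolding dist_bound_def using eff_dist_nonneg by (auto intro!: sum_nonneg simp: PiE_iff)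

lemma source_channel_test_channel: "test_channel Sa Rh E Q \<Longrightarrow> source_channel XS YS pE Q"
  using finite_XS finite_YS pE_nonneg sum_pE test_channel_bounds(1,3)
  by unfold_locales auto

context
  fixes Q assumes tc: "test_channel Sa Rh E Q"
begin

interpretation S: source_channel XS YS pE Q
  by (rule source_channel_test_channel[OF tc])

text \<open>Joint typicality is tested against the information density (which controls the rate), the
  effective distortions, and the indicators of \<open>hat S\<^sub>i = b\<close> with both signs (which pin the
  empirical output marginals to within \<open>\<delta>\<close> of \<open>out_marg Q\<close>).\<close>

definition test_funs :: "(('i \<Rightarrow> 'a) \<Rightarrow> ('i \<Rightarrow> 'b) \<Rightarrow> real) set" where
  "test_funs = insert S.info_density
     (range (\<lambda>i x t. eff_dist i x (t i))
      \<union> (\<lambda>(i, b) x t. if t i = b then 1 else 0) ` Sigma UNIV Rh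
      \<union> (\<lambda>(i, b) x t. if t i = b then -1 else 0) ` Sigma UNIV Rh)"

lemma finite_test_funs: "finite test_funs"
  unfolding test_funs_def using fin_R by auto

lemma info_density_in_test_funs: "S.info_density \<in> test_funs"
  unfolding test_funs_def by simp

lemma info_eq_info_SE_hat: "S.info = info_SE_hat pS Sa Rh E Q"
proof -
  have "(\<Sum>t'\<in>YS. pE x * Q x t') = pE x" if "x \<in> XS" for x
    using test_channel_bounds(3)[OF tc that] by (simp add: sum_distrib_left[symmetric])
  moreover have "(\<Sum>x'\<in>XS. pE x' * Q x' t) = S.out t" for t by (simp add: S.out_def S.joint_def)
  ultimately show ?thesis
    unfolding info_SE_hat_def mutual_info_def S.info_def S.mean_def S.info_density_def
    by (intro sum.cong refl) (simp add: S.joint_def)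
qed

lemma typical_test_fun:
  assumes "S.typical k \<delta> test_funs x y" and "h \<in> test_funs"
  shows "(\<Sum>j<k. h (x j) (y j)) \<le> real k * (S.mean h + \<delta>)"
  using assms unfolding S.typical_def by blast

lemma typical_eff_dist:
  assumes "S.typical k \<delta> test_funs x y"
  shows "(\<Sum>j<k. eff_dist i (x j) (y j i)) \<le> real k * (exp_eff_dist Q i + \<delta>)"
proof -
  have "(\<lambda>x t. eff_dist i x (t i)) \<in> test_funs" by (simp add: test_funs_def)
  moreover have "S.mean (\<lambda>x t. eff_dist i x (t i)) = exp_eff_dist Q i"
    by (simp add: S.mean_def exp_eff_dist_def S.joint_def)
  ultimately show ?thesis using typical_test_fun[OF assms, of "\<lambda>x t. eff_dist i x (t i)"] by simp
qed

lemma typical_letter_count: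
  assumes "S.typical k \<delta> test_funs x y" and b: "b \<in> Rh i"
  shows "\<bar>(\<Sum>j<k. if y j i = b then 1 else 0) - real k * out_marg Q i b\<bar> \<le> real k * \<delta>"
proof -
  have m: "S.mean (\<lambda>x t. if t i = b then c else 0) = c * out_marg Q i b" for c
    unfolding S.mean_def out_marg_def S.joint_def sum_distrib_left
    by (intro sum.cong refl) (simp add: if_distrib[of "\<lambda>z. _ * z"] cong: if_cong)
  have "(\<lambda>x t. if t i = b then c else 0) \<in> test_funs" if "c = 1 \<or> c = -1" for c :: real
    using that b unfolding test_funs_def by (auto intro!: image_eqI[where x="(i, b)"])
  then have le: "(\<Sum>j<k. if y j i = b then c else 0) \<le> real k * (c * out_marg Q i b + \<delta>)"
    if "c = 1 \<or> c = -1" for c :: real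
    using typical_test_fun[OF assms(1), of "\<lambda>x t. if t i = b then c else 0"] that by (simp add: m)
  have "(\<Sum>j<k. if y j i = b then -1 else 0) = - (\<Sum>j<k. if y j i = b then 1 else (0::real))"
    by (simp add: sum_negf[symmetric] if_distrib[of uminus] cong: if_cong)
  then show ?thesis using le[of 1] le[of "-1"] by (simp add: abs_le_iff algebra_simps)
qed

context
  fixes k :: nat and \<delta> :: real and N :: nat and c :: "nat \<Rightarrow> nat \<Rightarrow> 'i \<Rightarrow> 'b"
  assumes k: "k > 0" and \<delta>: "\<delta> > 0" and N: "1 \<le> N" and c: "\<forall>m<N. c m \<in> seq_space k YS"
begin

definition covered :: "(nat \<Rightarrow> 'i \<Rightarrow> 'a) \<Rightarrow> bool" where
  "covered x \<longleftrightarrow> (\<exists>m<N. S.typical k \<delta> test_funs x (c m))"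

definition encoder :: "(nat \<Rightarrow> 'i \<Rightarrow> 'a) \<Rightarrow> nat" where
  "encoder x = (if covered x then LEAST m. m < N \<and> S.typical k \<delta> test_funs x (c m) else 0)"

definition miss_prob :: real where
  "miss_prob = (\<Sum>x\<in>seq_space k XS. if covered x then 0 else iid_prob k pE x)"

lemma encoder_typical:
  assumes "covered x"
  shows "encoder x < N \<and> S.typical k \<delta> test_funs x (c (encoder x))"
proof -
  obtain m where "m < N \<and> S.typical k \<delta> test_funs x (c m)" using assms by (auto simp: covered_def)
  then have "(\<lambda>m. m < N \<and> S.typical k \<delta> test_funs x (c m)) (LEAST m. m < N \<and> S.typical k \<delta> test_funs x (c m))"
    by (rule LeastI)
  then show ?thesis using assms by (simp add: encoder_def)
qed

lemma encoder_less: "encoder x < N"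
  using encoder_typical N by (cases "covered x") (auto simp: encoder_def)

lemma codeword_letter: "j < k \<Longrightarrow> c (encoder x) j \<in> YS"
  using c encoder_less seq_space_letter by blast

lemma code_valid_encoder: "code_valid Sa Rh E k N encoder c"
proof -
  have "c m j i \<in> Rh i" if "m < N" "j < k" for m j i
    using seq_space_letter[OF c[rule_format, OF that(1)] that(2)] by (simp add: PiE_iff)
  then show ?thesis using N encoder_less by (simp add: code_valid_def)
qed

lemma sum_iid_prob_pE: "sum (iid_prob k pE) (seq_space k XS) = 1"
  by (rule sum_iid_prob[OF finite_XS sum_pE])

lemma code_dist_encoder_le:
  "code_dist pS Sa E d k encoder c i \<le> exp_eff_dist Q i + \<delta> + dist_bound * miss_prob"
proof -
  have "code_dist pS Sa E d k encoder c i
      = (\<Sum>x\<in>seq_space k XS. iid_prob k pE x * ((1 / real k) * (\<Sum>j<k. eff_dist i (x j) (c (encoder x) j i))))"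
    unfolding code_dist_eq_avg[OF k] sum_avg_swap ..
  also have "\<dots> \<le> (exp_eff_dist Q i + \<delta>) + dist_bound * miss_prob"
    unfolding miss_prob_def
  proof (rule sum_weighted_le_bad_mass[OF finite_seq_space[OF finite_XS] _ sum_iid_prob_pE])
    fix x assume x: "x \<in> seq_space k XS"
    show "(1 / real k) * (\<Sum>j<k. eff_dist i (x j) (c (encoder x) j i))
        \<le> exp_eff_dist Q i + \<delta> + (if covered x then 0 else dist_bound)"
    proof (cases "covered x")
      case True
      then have "(\<Sum>j<k. eff_dist i (x j) (c (encoder x) j i)) \<le> real k * (exp_eff_dist Q i + \<delta>)"
        using typical_eff_dist encoder_typical by blast
      then show ?thesis using True k by (simp add: divide_le_eq mult.commute)
    next
      case False
      have "(\<Sum>j<k. eff_dist i (x j) (c (encoder x) j i)) \<le> (\<Sum>j<k. dist_bound)"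
        using eff_dist_le_dist_bound[OF seq_space_letter[OF x] codeword_letter] by (intro sum_mono) simp
      also have "\<dots> \<le> real k * (exp_eff_dist Q i + \<delta> + dist_bound)"
        using exp_eff_dist_nonneg[OF tc, of i] \<delta> by (simp add: mult_left_mono)
      finally show ?thesis using False k by (simp add: divide_le_eq mult.commute)
    qed
  qed (rule iid_prob_pE_nonneg)
  finally show ?thesis .
qed

definition letter_freq :: "(nat \<Rightarrow> 'i \<Rightarrow> 'a) \<Rightarrow> 'i \<Rightarrow> 'b \<Rightarrow> real" where
  "letter_freq x i b = (1 / real k) * (\<Sum>j<k. if c (encoder x) j i = b then 1 else 0)"

lemma code_recon_marg_encoder:
  "code_recon_marg pS Sa E k encoder c i b = (\<Sum>x\<in>seq_space k XS. iid_prob k pE x * letter_freq x i b)"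
  unfolding code_recon_marg_eq_avg letter_freq_def sum_avg_swap ..

lemma letter_freq_bounds: "0 \<le> letter_freq x i b" "letter_freq x i b \<le> 1"
proof -
  have "0 \<le> (\<Sum>j<k. if c (encoder x) j i = b then 1 else (0::real))" by (intro sum_nonneg) auto
  moreover have "(\<Sum>j<k. if c (encoder x) j i = b then 1 else (0::real)) \<le> (\<Sum>j<k. 1)"
    by (intro sum_mono) auto
  ultimately show "0 \<le> letter_freq x i b" "letter_freq x i b \<le> 1"
    using k by (simp_all add: letter_freq_def divide_le_eq)
qed

lemma code_recon_marg_encoder_close:
  assumes b: "b \<in> Rh i"
  shows "\<bar>code_recon_marg pS Sa E k encoder c i b - out_marg Q i b\<bar> \<le> \<delta> + miss_prob"
proof -
  have "code_recon_marg pS Sa E k encoder c i b - out_marg Q i b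
      = (\<Sum>x\<in>seq_space k XS. iid_prob k pE x * (letter_freq x i b - out_marg Q i b))"
    unfolding code_recon_marg_encoder using sum_iid_prob_pE
    by (simp add: algebra_simps sum_subtractf sum_distrib_right[symmetric])
  then have "\<bar>code_recon_marg pS Sa E k encoder c i b - out_marg Q i b\<bar>
      \<le> (\<Sum>x\<in>seq_space k XS. iid_prob k pE x * \<bar>letter_freq x i b - out_marg Q i b\<bar>)"
    using iid_prob_pE_nonneg by (simp add: sum_abs[THEN order_trans] abs_mult)
  also have "\<dots> \<le> \<delta> + 1 * miss_prob"
    unfolding miss_prob_def
  proof (rule sum_weighted_le_bad_mass[OF finite_seq_space[OF finite_XS] _ sum_iid_prob_pE])
    fix x assume x: "x \<in> seq_space k XS"
    show "\<bar>letter_freq x i b - out_marg Q i b\<bar> \<le> \<delta> + (if covered x then 0 else 1)"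
    proof (cases "covered x")
      case True
      define cnt where "cnt = (\<Sum>j<k. if c (encoder x) j i = b then 1 else (0::real))"
      have "\<bar>cnt - real k * out_marg Q i b\<bar> \<le> real k * \<delta>"
        unfolding cnt_def using typical_letter_count[OF conjunct2[OF encoder_typical[OF True]] b] .
      moreover have "letter_freq x i b - out_marg Q i b = (cnt - real k * out_marg Q i b) / real k"
        using k by (simp add: letter_freq_def cnt_def field_simps)
      ultimately have "\<bar>letter_freq x i b - out_marg Q i b\<bar> \<le> real k * \<delta> / real k"
        using k by (simp add: abs_divide divide_le_eq mult.commute)
      then show ?thesis using True k by simp
    next
      case False
      have s: "out_marg Q i \<in> prob_simplex (Rh i)" by (rule out_marg_simplex[OF tc])
      then have "out_marg Q i b \<le> sum (out_marg Q i) (Rh i)"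
        using fin_R b by (intro member_le_sum) (auto simp: prob_simplex_def)
      then have "0 \<le> out_marg Q i b" "out_marg Q i b \<le> 1" using s by (auto simp: prob_simplex_def)
      then show ?thesis using False letter_freq_bounds[of x i b] \<delta> by (simp add: abs_le_iff)
    qed
  qed (rule iid_prob_pE_nonneg)
  finally show ?thesis by (simp only: mult_1)
qed

lemma sum_letter_freq: "(\<Sum>b\<in>Rh i. letter_freq x i b) = 1"
proof -
  have one: "(\<Sum>b\<in>Rh i. if c (encoder x) j i = b then 1 else (0::real)) = 1" if "j < k" for j
    using codeword_letter[OF that, of x] fin_R[of i] by (simp add: PiE_iff sum.delta)
  have "(\<Sum>b\<in>Rh i. letter_freq x i b)
      = (1 / real k) * (\<Sum>j<k. \<Sum>b\<in>Rh i. if c (encoder x) j i = b then 1 else (0::real))"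
    unfolding letter_freq_def sum_distrib_left[symmetric] by (subst sum.swap) (rule refl)
  also have "\<dots> = 1" using k by (simp add: one)
  finally show ?thesis .
qed

lemma code_recon_marg_encoder_simplex: "code_recon_marg pS Sa E k encoder c i \<in> prob_simplex (Rh i)"
  unfolding prob_simplex_def
proof (intro CollectI conjI allI impI)
  fix b
  show "0 \<le> code_recon_marg pS Sa E k encoder c i b"
    unfolding code_recon_marg_encoder using iid_prob_pE_nonneg letter_freq_bounds
    by (intro sum_nonneg mult_nonneg_nonneg)
  assume b: "b \<notin> Rh i"
  have "c (encoder x) j i \<noteq> b" if "j < k" for x j
    using codeword_letter[OF that, of x] b by (auto simp: PiE_iff)
  then have "letter_freq x i b = 0" for x by (simp add: letter_freq_def)
  then show "code_recon_marg pS Sa E k encoder c i b = 0" by (simp add: code_recon_marg_encoder)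
next
  have "sum (code_recon_marg pS Sa E k encoder c i) (Rh i)
      = (\<Sum>x\<in>seq_space k XS. iid_prob k pE x * (\<Sum>b\<in>Rh i. letter_freq x i b))"
    unfolding code_recon_marg_encoder sum_distrib_left by (rule sum.swap)
  then show "sum (code_recon_marg pS Sa E k encoder c i) (Rh i) = 1"
    by (simp add: sum_letter_freq sum_iid_prob_pE)
qed

end

definition miss_const :: "real \<Rightarrow> real" where
  "miss_const \<delta> = 2 * (\<Sum>h\<in>test_funs. S.var h) / \<delta>^2 + 2 / (\<delta> * ln 2)"

lemma exists_good_code:
  assumes k: "k > 0" and \<delta>: "\<delta> > 0"
  obtains N f g where "code_valid Sa Rh E k N f g"
    "log 2 (real N) / real k \<le> info_SE_hat pS Sa Rh E Q + 2 * \<delta>"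
    "\<And>i. code_dist pS Sa E d k f g i \<le> exp_eff_dist Q i + \<delta> + dist_bound * (miss_const \<delta> / real k)"
    "\<And>i b. b \<in> Rh i \<Longrightarrow> \<bar>code_recon_marg pS Sa E k f g i b - out_marg Q i b\<bar> \<le> \<delta> + miss_const \<delta> / real k"
    "\<And>i. code_recon_marg pS Sa E k f g i \<in> prob_simplex (Rh i)"
proof -
  obtain N c where N: "1 \<le> N" and rate: "log 2 (real N) \<le> real k * (S.info + 2 * \<delta>)"
    and c: "\<forall>m<N. c m \<in> seq_space k YS"
    and miss: "(\<Sum>x\<in>seq_space k XS. if \<exists>m<N. S.typical k \<delta> test_funs x (c m) then 0 else iid_prob k pE x)
      \<le> miss_const \<delta> / real k"
    using S.exists_good_codebook[OF k \<delta> finite_test_funs info_density_in_test_funs]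
    unfolding miss_const_def by blast
  have "miss_prob k \<delta> N c \<le> miss_const \<delta> / real k"
    using miss by (simp add: miss_prob_def[OF k \<delta> N c] covered_def[OF k \<delta> N c])
  then have "dist_bound * miss_prob k \<delta> N c \<le> dist_bound * (miss_const \<delta> / real k)"
    using dist_bound_nonneg by (rule mult_left_mono)
  moreover have "log 2 (real N) / real k \<le> info_SE_hat pS Sa Rh E Q + 2 * \<delta>"
    using rate k info_eq_info_SE_hat by (simp add: divide_le_eq mult.commute)
  ultimately show ?thesis
    using that[OF code_valid_encoder[OF k \<delta> N c]] code_dist_encoder_le[OF k \<delta> N c]
      code_recon_marg_encoder_close[OF k \<delta> N c] code_recon_marg_encoder_simplex[OF k \<delta> N c]
      \<open>miss_prob k \<delta> N c \<le> miss_const \<delta> / real k\<close>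
    by (smt (verit))
qed

end

end

context rdp_problem begin

lemma perception_nbhd:
  assumes tc: "test_channel Sa Rh E Q" and e: "\<epsilon> > 0"
  obtains \<eta> where "\<eta> > 0"
    "\<And>i r. r \<in> prob_simplex (Rh i) \<Longrightarrow> (\<forall>b\<in>Rh i. \<bar>r b - out_marg Q i b\<bar> < \<eta>)
       \<Longrightarrow> \<phi> i (marg_i pS Sa i) r < \<phi> i (marg_i pS Sa i) (out_marg Q i) + \<epsilon>"
proof -
  have "\<exists>\<eta>>0. \<forall>r\<in>prob_simplex (Rh i). (\<forall>b\<in>Rh i. \<bar>r b - out_marg Q i b\<bar> < \<eta>)
      \<longrightarrow> \<bar>\<phi> i (marg_i pS Sa i) r - \<phi> i (marg_i pS Sa i) (out_marg Q i)\<bar> < \<epsilon>" for i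
    using e by (intro continuous_on_support_nbhd[OF phi_continuous out_marg_simplex[OF tc] fin_R])
      (auto simp: prob_simplex_def)
  then obtain \<eta> where \<eta>: "\<And>i. \<eta> i > 0" "\<And>i r. r \<in> prob_simplex (Rh i)
      \<Longrightarrow> (\<forall>b\<in>Rh i. \<bar>r b - out_marg Q i b\<bar> < \<eta> i)
      \<Longrightarrow> \<bar>\<phi> i (marg_i pS Sa i) r - \<phi> i (marg_i pS Sa i) (out_marg Q i)\<bar> < \<epsilon>"
    by metis
  have "Min (range \<eta>) > 0" "\<And>i. Min (range \<eta>) \<le> \<eta> i" using \<eta>(1) by auto
  then show ?thesis using that[of "Min (range \<eta>)"] \<eta>(2) by force
qed

theorem feasible_imp_achievable:
  assumes fe: "feasible D P Q"
  shows "achievable pS Sa Rh E d \<phi> (info_SE_hat pS Sa Rh E Q) D P"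
  unfolding achievable_def
proof (intro allI impI)
  fix \<epsilon> :: real assume e: "\<epsilon> > 0"
  have tc: "test_channel Sa Rh E Q" and dist: "\<And>i. exp_eff_dist Q i \<le> D i"
    and perc: "\<And>i. \<phi> i (marg_i pS Sa i) (out_marg Q i) \<le> P i"
    using fe by (auto simp: feasible_iff)
  obtain \<eta> where \<eta>: "\<eta> > 0" "\<And>i r. r \<in> prob_simplex (Rh i) \<Longrightarrow> (\<forall>b\<in>Rh i. \<bar>r b - out_marg Q i b\<bar> < \<eta>)
       \<Longrightarrow> \<phi> i (marg_i pS Sa i) r < \<phi> i (marg_i pS Sa i) (out_marg Q i) + \<epsilon> / 2"
    using perception_nbhd[OF tc, of "\<epsilon> / 2"] e by auto
  define \<delta> where "\<delta> = min (\<epsilon> / 4) (\<eta> / 4)"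
  define \<tau> where "\<tau> = min (\<epsilon> / (2 * (dist_bound + 1))) (\<eta> / 2)"
  have \<delta>: "\<delta> > 0" "\<delta> \<le> \<epsilon> / 4" "\<delta> \<le> \<eta> / 4" using e \<eta> by (auto simp: \<delta>_def)
  have "dist_bound * \<tau> \<le> \<epsilon> / 2"
  proof -
    have "dist_bound * \<tau> \<le> dist_bound * (\<epsilon> / (2 * (dist_bound + 1)))"
      unfolding \<tau>_def by (rule mult_left_mono[OF min.cobounded1 dist_bound_nonneg])
    also have "\<dots> \<le> \<epsilon> / 2" using dist_bound_nonneg e by (simp add: field_simps)
    finally show ?thesis .
  qed
  moreover have "\<tau> \<le> \<eta> / 2" unfolding \<tau>_def by (rule min.cobounded2)
  moreover have "\<tau> > 0" using e \<eta> dist_bound_nonneg unfolding \<tau>_def by (simp add: add_nonneg_pos)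
  ultimately have \<tau>: "\<tau> > 0" "dist_bound * \<tau> \<le> \<epsilon> / 2" "\<tau> \<le> \<eta> / 2" by auto
  show "\<exists>K. \<forall>k\<ge>K. \<exists>N f g. code_valid Sa Rh E k N f g
      \<and> log 2 (real N) / real k \<le> info_SE_hat pS Sa Rh E Q + \<epsilon>
      \<and> (\<forall>i. code_dist pS Sa E d k f g i \<le> D i + \<epsilon>)
      \<and> (\<forall>i. \<phi> i (marg_i pS Sa i) (code_recon_marg pS Sa E k f g i) \<le> P i + \<epsilon>)"
  proof (rule exI[of _ "nat \<lceil>miss_const Q \<delta> / \<tau>\<rceil> + 1"], intro allI impI)
    fix k assume "nat \<lceil>miss_const Q \<delta> / \<tau>\<rceil> + 1 \<le> k"
    then have k: "k > 0" and "miss_const Q \<delta> / \<tau> < real k" by linarith+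
    then have small: "miss_const Q \<delta> / real k < \<tau>" using \<tau>(1) by (simp add: divide_less_eq mult.commute)
    obtain N f g where code: "code_valid Sa Rh E k N f g"
      "log 2 (real N) / real k \<le> info_SE_hat pS Sa Rh E Q + 2 * \<delta>"
      "\<And>i. code_dist pS Sa E d k f g i \<le> exp_eff_dist Q i + \<delta> + dist_bound * (miss_const Q \<delta> / real k)"
      "\<And>i b. b \<in> Rh i \<Longrightarrow> \<bar>code_recon_marg pS Sa E k f g i b - out_marg Q i b\<bar> \<le> \<delta> + miss_const Q \<delta> / real k"
      "\<And>i. code_recon_marg pS Sa E k f g i \<in> prob_simplex (Rh i)"
      using exists_good_code[OF tc k \<delta>(1)] by metis
    have "code_dist pS Sa E d k f g i \<le> D i + \<epsilon>" for i
      using code(3)[of i] dist[of i] mult_left_mono[OF less_imp_le[OF small] dist_bound_nonneg] \<tau> \<delta>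
      by linarith
    moreover have "\<phi> i (marg_i pS Sa i) (code_recon_marg pS Sa E k f g i) \<le> P i + \<epsilon>" for i
    proof -
      have "\<forall>b\<in>Rh i. \<bar>code_recon_marg pS Sa E k f g i b - out_marg Q i b\<bar> < \<eta>"
        using code(4)[of _ i] small \<delta> \<tau> by (fastforce intro: le_less_trans)
      from \<eta>(2)[OF code(5) this] show ?thesis using perc[of i] e by linarith
    qed
    ultimately show "\<exists>N f g. code_valid Sa Rh E k N f g
      \<and> log 2 (real N) / real k \<le> info_SE_hat pS Sa Rh E Q + \<epsilon>
      \<and> (\<forall>i. code_dist pS Sa E d k f g i \<le> D i + \<epsilon>)
      \<and> (\<forall>i. \<phi> i (marg_i pS Sa i) (code_recon_marg pS Sa E k f g i) \<le> P i + \<epsilon>)"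
      using code(1,2) \<delta> by (intro exI[of _ N] exI[of _ f] exI[of _ g]) auto
  qed
qed

end

theorem lemma1:
  fixes pS :: "('i::finite \<Rightarrow> 'a) \<Rightarrow> real"
    and Sa :: "'i \<Rightarrow> 'a set"
    and Rh :: "'i \<Rightarrow> 'b set"
    and E :: "'i set"
    and d :: "'i \<Rightarrow> 'a \<Rightarrow> 'b \<Rightarrow> real"
    and \<phi> :: "'i \<Rightarrow> ('a \<Rightarrow> real) \<Rightarrow> ('b \<Rightarrow> real) \<Rightarrow> real"
    and D P :: "'i \<Rightarrow> real"
  assumes fin_S: "\<And>i. finite (Sa i)"
    and fin_R: "\<And>i. finite (Rh i)"
    and ne_R: "\<And>i. Rh i \<noteq> {}"
    and pmf: "pS \<in> prob_simplex (Pi\<^sub>E UNIV Sa)"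
    and E_ne: "E \<noteq> {}"
    and d_nonneg: "\<And>i a b. a \<in> Sa i \<Longrightarrow> b \<in> Rh i \<Longrightarrow> 0 \<le> d i a b"
    and phi_nonneg: "\<And>i p q. p \<in> prob_simplex (Sa i) \<Longrightarrow> q \<in> prob_simplex (Rh i) \<Longrightarrow> 0 \<le> \<phi> i p q"
    and phi_cc: "\<And>i p. p \<in> prob_simplex (Sa i) \<Longrightarrow> convex_cont_on_simplex (Rh i) (\<phi> i p)"
  shows "R_op pS Sa Rh E d \<phi> D P = R_info pS Sa Rh E d \<phi> D P"
proof -
  interpret rdp_problem pS Sa Rh E d \<phi>
    by unfold_locales (use fin_S fin_R ne_R pmf d_nonneg phi_cc in auto)
  have R_info: "R_info pS Sa Rh E d \<phi> D P = Inf {ereal (info_SE_hat pS Sa Rh E Q) | Q. feasible D P Q}"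
    by (simp add: R_info_def feasible_def)
  show ?thesis unfolding R_op_def R_info
  proof (intro antisym Inf_mono)
    fix z assume "z \<in> {ereal (info_SE_hat pS Sa Rh E Q) | Q. feasible D P Q}"
    then show "\<exists>y\<in>{ereal R | R. achievable pS Sa Rh E d \<phi> R D P}. y \<le> z"
      using feasible_imp_achievable by blast
  next
    fix z assume "z \<in> {ereal R | R. achievable pS Sa Rh E d \<phi> R D P}"
    then show "\<exists>y\<in>{ereal (info_SE_hat pS Sa Rh E Q) | Q. feasible D P Q}. y \<le> z"
      by (force elim: achievable_imp_feasible)
  qed
qed

end
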